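(* Let $A$ be a finite set, $n\in\mathbb{N}$ and $r>0$. If $\mu\in\Pr(A^n)$ does not satisfy $\mathrm{T}(rn/200,r)$, then there is a fuzzy partition $(\rho_1,\rho_2)$ on $A^n$ such that $\mathrm{I}_\mu(\rho_1,\rho_2)\ge r^2n^{-1}e^{-n}$ and $$\langle\rho_1\rangle\,\mathrm{DTC}(\mu_{|\rho_1})+\langle\rho_2\rangle\,\mathrm{DTC}(\mu_{|\rho_2})\le\mathrm{DTC}(\mu)-\tfrac12\mathrm{I}_\mu(\rho_1,\rho_2).$$
   Context: $\langle\cdot\rangle$ denotes integration with respect to $\mu$. A fuzzy partition is a tuple of functions $A^n\to[0,1]$ summing to $1$. $\mu_{|\rho}:=\rho\mu/\langle\rho\rangle$ (a term $\langle\rho\rangle\,\mathrm{DTC}(\mu_{|\rho})$ with $\langle\rho\rangle=0$ is read as $0$). $\mathrm{I}_\mu(\rho_1,\dots,\rho_k)=\sum_j\langle\rho_j\rangle\mathrm{D}(\mu_{|\rho_j}\|\mu)$, the mutual information between $\xi\sim\mu$ and a label $\zeta$ with $\mathbb{P}(\zeta=j,\xi=\mathbf x)=\rho_j(\mathbf x)\mu(\mathbf x)$. For $\xi=(\xi_1,\dots,\xi_n)\sim\mu$, $\mathrm{DTC}(\mu)=\mathrm{H}(\xi)-\sum_i\mathrm{H}(\xi_i|\xi_{[n]\setminus\{i\}})$. $A^n$ has normalized Hamming metric $d_n$, with transportation metric $\overline{d_n}$; $\mu$ satisfies $\mathrm{T}(\kappa,r)$ if $\overline{d_n}(\nu,\mu)\le\frac1\kappa\mathrm{D}(\nu\|\mu)+r$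 for all $\nu\in\Pr(A^n)$, $\mathrm{D}$ being KL divergence. *)

theory Defs
  imports Complex_Main "HOL-Library.FuncSet"
begin

text \<open>The finite alphabet A is a finite type 'a. Words of length n are functions
  nat => 'a, extensional outside {..<n}. Measures on A^n are real-valued functions
  on words, supported on the word space. Logarithms are natural.\<close>

definition words :: "nat \<Rightarrow> (nat \<Rightarrow> 'a) set" where
  "words n = PiE {..<n} (\<lambda>_. UNIV)"

definition is_prob :: "nat \<Rightarrow> ((nat \<Rightarrow> 'a::finite) \<Rightarrow> real) \<Rightarrow> bool" where
  "is_prob n \<mu> \<longleftrightarrow> (\<forall>x. 0 \<le> \<mu> x) \<and> (\<forall>x. x \<notin> words n \<longrightarrow> \<mu> x = 0)
     \<and> (\<Sum>x\<in>words n. \<mu> x) = 1"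

definition hamming :: "nat \<Rightarrow> (nat \<Rightarrow> 'a) \<Rightarrow> (nat \<Rightarrow> 'a) \<Rightarrow> real" where
  "hamming n x y = real (card {i. i < n \<and> x i \<noteq> y i}) / real n"

definition coupling :: "nat \<Rightarrow> ((nat \<Rightarrow> 'a::finite) \<times> (nat \<Rightarrow> 'a) \<Rightarrow> real)
   \<Rightarrow> ((nat \<Rightarrow> 'a) \<Rightarrow> real) \<Rightarrow> ((nat \<Rightarrow> 'a) \<Rightarrow> real) \<Rightarrow> bool" where
  "coupling n \<pi> \<nu> \<mu> \<longleftrightarrow> (\<forall>z. 0 \<le> \<pi> z) \<and> (\<forall>z. z \<notin> words n \<times> words n \<longrightarrow> \<pi> z = 0)
     \<and> (\<forall>x\<in>words n. (\<Sum>y\<in>words n. \<pi> (x, y)) = \<nu> x)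
     \<and> (\<forall>y\<in>words n. (\<Sum>x\<in>words n. \<pi> (x, y)) = \<mu> y)"

definition transport_dist :: "nat \<Rightarrow> ((nat \<Rightarrow> 'a::finite) \<Rightarrow> real) \<Rightarrow> ((nat \<Rightarrow> 'a) \<Rightarrow> real) \<Rightarrow> real" where
  "transport_dist n \<nu> \<mu> = Inf {(\<Sum>z\<in>words n \<times> words n. \<pi> z * hamming n (fst z) (snd z)) | \<pi>. coupling n \<pi> \<nu> \<mu>}"

text \<open>KL divergence (finite when \<nu> is absolutely continuous w.r.t. \<mu>; with 0 ln 0 = 0).\<close>
definition abs_cont :: "nat \<Rightarrow> ((nat \<Rightarrow> 'a) \<Rightarrow> real) \<Rightarrow> ((nat \<Rightarrow> 'a) \<Rightarrow> real) \<Rightarrow> bool" where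
  "abs_cont n \<nu> \<mu> \<longleftrightarrow> (\<forall>x\<in>words n. \<mu> x = 0 \<longrightarrow> \<nu> x = 0)"

definition KL :: "nat \<Rightarrow> ((nat \<Rightarrow> 'a::finite) \<Rightarrow> real) \<Rightarrow> ((nat \<Rightarrow> 'a) \<Rightarrow> real) \<Rightarrow> real" where
  "KL n \<nu> \<mu> = (\<Sum>x\<in>words n. \<nu> x * ln (\<nu> x / \<mu> x))"

text \<open>T(kappa, r); when \<nu> is not absolutely continuous, D = infinity and the inequality is trivial.\<close>
definition transport_ineq :: "nat \<Rightarrow> ((nat \<Rightarrow> 'a::finite) \<Rightarrow> real) \<Rightarrow> real \<Rightarrow> real \<Rightarrow> bool" where
  "transport_ineq n \<mu> \<kappa> r \<longleftrightarrow> (\<forall>\<nu>. is_prob n \<nu> \<longrightarrow> abs_cont n \<nu> \<mu> \<longrightarrow>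
      transport_dist n \<nu> \<mu> \<le> (1 / \<kappa>) * KL n \<nu> \<mu> + r)"

definition entropy :: "nat \<Rightarrow> ((nat \<Rightarrow> 'a::finite) \<Rightarrow> real) \<Rightarrow> real" where
  "entropy n \<mu> = - (\<Sum>x\<in>words n. \<mu> x * ln (\<mu> x))"

definition marg_off :: "nat \<Rightarrow> nat \<Rightarrow> ((nat \<Rightarrow> 'a::finite) \<Rightarrow> real) \<Rightarrow> (nat \<Rightarrow> 'a) \<Rightarrow> real" where
  "marg_off n i \<mu> x = (\<Sum>y\<in>{y\<in>words n. \<forall>j. j \<noteq> i \<longrightarrow> y j = x j}. \<mu> y)"

definition cond_entropy :: "nat \<Rightarrow> nat \<Rightarrow> ((nat \<Rightarrow> 'a::finite) \<Rightarrow> real) \<Rightarrow> real" where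
  "cond_entropy n i \<mu> = - (\<Sum>x\<in>words n. \<mu> x * ln (\<mu> x / marg_off n i \<mu> x))"

definition DTC :: "nat \<Rightarrow> ((nat \<Rightarrow> 'a::finite) \<Rightarrow> real) \<Rightarrow> real" where
  "DTC n \<mu> = entropy n \<mu> - (\<Sum>i<n. cond_entropy n i \<mu>)"

definition fuzzy_partition2 :: "nat \<Rightarrow> ((nat \<Rightarrow> 'a) \<Rightarrow> real) \<Rightarrow> ((nat \<Rightarrow> 'a) \<Rightarrow> real) \<Rightarrow> bool" where
  "fuzzy_partition2 n \<rho>1 \<rho>2 \<longleftrightarrow> (\<forall>x\<in>words n. 0 \<le> \<rho>1 x \<and> \<rho>1 x \<le> 1 \<and> 0 \<le> \<rho>2 x \<and> \<rho>2 x \<le> 1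
      \<and> \<rho>1 x + \<rho>2 x = 1)"

definition integ :: "nat \<Rightarrow> ((nat \<Rightarrow> 'a::finite) \<Rightarrow> real) \<Rightarrow> ((nat \<Rightarrow> 'a) \<Rightarrow> real) \<Rightarrow> real" where
  "integ n \<mu> \<rho> = (\<Sum>x\<in>words n. \<rho> x * \<mu> x)"

definition cond_meas :: "nat \<Rightarrow> ((nat \<Rightarrow> 'a::finite) \<Rightarrow> real) \<Rightarrow> ((nat \<Rightarrow> 'a) \<Rightarrow> real) \<Rightarrow> (nat \<Rightarrow> 'a) \<Rightarrow> real" where
  "cond_meas n \<mu> \<rho> x = \<rho> x * \<mu> x / integ n \<mu> \<rho>"

definition mutual_info2 :: "nat \<Rightarrow> ((nat \<Rightarrow> 'a::finite) \<Rightarrow> real) \<Rightarrow> ((nat \<Rightarrow> 'a) \<Rightarrow> real) \<Rightarrow> ((nat \<Rightarrow> 'a) \<Rightarrow> real) \<Rightarrow> real" where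
  "mutual_info2 n \<mu> \<rho>1 \<rho>2 =
     integ n \<mu> \<rho>1 * KL n (cond_meas n \<mu> \<rho>1) \<mu> + integ n \<mu> \<rho>2 * KL n (cond_meas n \<mu> \<rho>2) \<mu>"

end

theory Submission
  imports Defs
begin

text \<open>
  Kantorovich duality (derived here from
  Farkas' lemma) turns a measure \<open>\<nu>\<close> witnessing the failure into a potential \<open>g\<close> that is
  \<open>1\<close>-Lipschitz for the Hamming distance and takes values in \<open>[-1, 0]\<close>, and the
  Donsker--Varadhan inequality shows \<open>ln \<langle>e\<^bsup>\<kappa> g\<^esup>\<rangle> > \<kappa> (\<langle>g\<rangle> + r)\<close>. Against the quadratic bound
  \<open>ln \<langle>e\<^bsup>t g\<^esup>\<rangle> \<le> t \<langle>g\<rangle> + t\<^sup>2 / 2\<close> the mean value theorem finds \<open>t \<in> [r, \<kappa>]\<close> at which the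
  tilted measure \<open>e\<^bsup>t g\<^esup> \<mu> / \<langle>e\<^bsup>t g\<^esup>\<rangle>\<close> is at divergence at least \<open>100 t\<^sup>2 / n\<close> from \<open>\<mu>\<close>.

  The fuzzy partition is \<open>\<rho>\<^sub>1 = e\<^bsup>t g\<^esup> / 2\<close>, \<open>\<rho>\<^sub>2 = 1 - \<rho>\<^sub>1\<close>; its mutual information is at least
  \<open>\<langle>\<rho>\<^sub>1\<rangle>\<close> times that divergence, and \<open>\<langle>\<rho>\<^sub>1\<rangle> \<ge> e\<^bsup>-n\<^esup> / 2\<close>. The dual total correlation splits
  exactly as \<open>\<Sum>\<^sub>j \<langle>\<rho>\<^sub>j\<rangle> DTC(\<mu>\<^bsub>|\<rho>\<^sub>j\<^esub>) = DTC(\<mu>) - I + \<Sum>\<^sub>i I(\<zeta>; \<xi>\<^sub>i | \<xi>\<^bsub>[n] - {i}\<^esub>)\<close>, and because \<open>g\<close>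
  moves by at most \<open>1 / n\<close> when one coordinate changes, \<open>\<rho>\<^sub>1\<close> is nearly constant on each
  fibre, so every conditional term is at most \<open>32 (t / n)\<^sup>2 \<langle>\<rho>\<^sub>1\<rangle>\<close>; their sum is at most \<open>I / 2\<close>.
\<close>

section \<open>Farkas' lemma by Fourier--Motzkin elimination\<close>

text \<open>Eliminating the variable \<open>j\<close> keeps the rows not involving
  \<open>x j\<close> and adds, for each pair of rows with opposite signs at \<open>j\<close>, the positive
  combination of the two in which \<open>x j\<close> cancels.\<close>

definition lin_feasible :: "'j set \<Rightarrow> (('j \<Rightarrow> real) \<times> real) set \<Rightarrow> bool" where
  "lin_feasible J S \<longleftrightarrow> (\<exists>x. \<forall>s\<in>S. (\<Sum>k\<in>J. fst s k * x k) \<le> snd s)"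

definition fm_combine :: "'j \<Rightarrow> (('j \<Rightarrow> real) \<times> real) \<times> (('j \<Rightarrow> real) \<times> real) \<Rightarrow> ('j \<Rightarrow> real) \<times> real" where
  "fm_combine j = (\<lambda>((a, b), (a', b')). (\<lambda>k. - a' j * a k + a j * a' k, - a' j * b + a j * b'))"

definition fm_eliminate :: "'j \<Rightarrow> (('j \<Rightarrow> real) \<times> real) set \<Rightarrow> (('j \<Rightarrow> real) \<times> real) set" where
  "fm_eliminate j S = {s\<in>S. fst s j = 0}
     \<union> fm_combine j ` ({s\<in>S. fst s j > 0} \<times> {s\<in>S. fst s j < 0})"

lemma finite_fm_eliminate: "finite S \<Longrightarrow> finite (fm_eliminate j S)"
  by (simp add: fm_eliminate_def)

lemma ex_between_finite:
  fixes f g :: "'b \<Rightarrow> real"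
  assumes "finite A" "finite B" "\<And>a b. a \<in> A \<Longrightarrow> b \<in> B \<Longrightarrow> f a \<le> g b"
  shows "\<exists>y. (\<forall>a\<in>A. f a \<le> y) \<and> (\<forall>b\<in>B. y \<le> g b)"
proof (cases "A = {}")
  case True
  then show ?thesis by (intro exI[of _ "Min (insert 0 (g ` B))"]) (auto simp: assms(2))
next
  case False
  then show ?thesis
    using assms by (intro exI[of _ "Max (f ` A)"]) (auto simp: Max_le_iff)
qed

lemma sum_fm_combine:
  "(\<Sum>k\<in>J. fst (fm_combine j (p, q)) k * x k)
     = - fst q j * (\<Sum>k\<in>J. fst p k * x k) + fst p j * (\<Sum>k\<in>J. fst q k * x k)"
proof -
  have "(\<Sum>k\<in>J. fst (fm_combine j (p, q)) k * x k)
      = (\<Sum>k\<in>J. - fst q j * (fst p k * x k) + fst p j * (fst q k * x k))"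
    by (simp add: fm_combine_def case_prod_beta algebra_simps)
  then show ?thesis by (simp only: sum.distrib sum_distrib_left)
qed

lemma lin_feasible_fm_eliminate:
  assumes "finite S" "finite J" "j \<notin> J" "lin_feasible J (fm_eliminate j S)"
  shows "lin_feasible (insert j J) S"
proof -
  obtain x where x: "\<forall>s\<in>fm_eliminate j S. (\<Sum>k\<in>J. fst s k * x k) \<le> snd s"
    using assms(4) unfolding lin_feasible_def by blast
  define slack where "slack s = (snd s - (\<Sum>k\<in>J. fst s k * x k)) / fst s j" for s
  define Sp where "Sp = {s\<in>S. fst s j > 0}"
  define Sn where "Sn = {s\<in>S. fst s j < 0}"
  have "slack q \<le> slack p" if p: "p \<in> Sp" and q: "q \<in> Sn" for p q
  proof -
    have "fm_combine j (p, q) \<in> fm_eliminate j S"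
      using p q by (auto simp: fm_eliminate_def Sp_def Sn_def)
    with x have "(\<Sum>k\<in>J. fst (fm_combine j (p, q)) k * x k) \<le> snd (fm_combine j (p, q))"
      by blast
    then have "- fst q j * (\<Sum>k\<in>J. fst p k * x k) + fst p j * (\<Sum>k\<in>J. fst q k * x k)
        \<le> - fst q j * snd p + fst p j * snd q"
      by (simp only: sum_fm_combine) (simp add: fm_combine_def case_prod_beta)
    moreover have "fst p j > 0" "fst q j < 0" using p q by (auto simp: Sp_def Sn_def)
    ultimately show ?thesis
      by (simp add: slack_def divide_simps algebra_simps)
  qed
  then obtain y where y: "\<forall>q\<in>Sn. slack q \<le> y" "\<forall>p\<in>Sp. y \<le> slack p"
    using ex_between_finite[of Sn Sp slack slack] assms(1) by (auto simp: Sp_def Sn_def)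
  have "(\<Sum>k\<in>insert j J. fst s k * (x(j := y)) k) \<le> snd s" if s: "s \<in> S" for s
  proof -
    have sum: "(\<Sum>k\<in>insert j J. fst s k * (x(j := y)) k) = fst s j * y + (\<Sum>k\<in>J. fst s k * x k)"
      using assms(2,3) by (auto intro!: sum.cong)
    consider "fst s j = 0" | "fst s j > 0" | "fst s j < 0" by linarith
    then show ?thesis
    proof cases
      case 1
      then show ?thesis using x s sum by (auto simp: fm_eliminate_def)
    next
      case 2
      then have "y \<le> slack s" using y(2) s unfolding Sp_def by blast
      with 2 show ?thesis unfolding sum by (simp add: slack_def field_simps)
    next
      case 3
      then have "slack s \<le> y" using y(1) s unfolding Sn_def by blast
      with 3 show ?thesis unfolding sum by (simp add: slack_def field_simps)
    qed
  qed
  then show ?thesis unfolding lin_feasible_def by blast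
qed

lemma sum_if_eq_mult:
  fixes f :: "'b \<Rightarrow> real"
  assumes "finite S" "a \<in> S"
  shows "(\<Sum>s\<in>S. (if s = a then c else 0) * f s) = c * f a"
  using assms by (simp add: if_distrib[of "\<lambda>c. c * _"] cong: if_cong)

lemma fm_eliminate_nonneg_combination:
  assumes "finite S" "s' \<in> fm_eliminate j S"
  shows "fst s' j = 0 \<and> (\<exists>c. (\<forall>s. 0 \<le> c s) \<and> (\<forall>k. (\<Sum>s\<in>S. c s * fst s k) = fst s' k)
           \<and> (\<Sum>s\<in>S. c s * snd s) = snd s')"
  using assms(2) unfolding fm_eliminate_def
proof (elim UnE CollectE imageE conjE)
  assume "s' \<in> S" "fst s' j = 0"
  moreover have "(\<Sum>s\<in>S. (if s = s' then 1 else 0) * f s) = f s'" for f :: "_ \<Rightarrow> real"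
    using \<open>s' \<in> S\<close> assms(1) by (simp add: sum_if_eq_mult)
  ultimately show ?thesis by (intro conjI exI[of _ "\<lambda>s. if s = s' then 1 else 0"]) auto
next
  fix pq assume "s' = fm_combine j pq" "pq \<in> {s \<in> S. 0 < fst s j} \<times> {s \<in> S. fst s j < 0}"
  then obtain p q where pq: "s' = fm_combine j (p, q)" "p \<in> S" "q \<in> S" "fst p j > 0" "fst q j < 0"
    by auto
  define c where "c s = (if s = p then - fst q j else 0) + (if s = q then fst p j else 0)" for s
  have "(\<Sum>s\<in>S. c s * f s) = - fst q j * f p + fst p j * f q" for f :: "_ \<Rightarrow> real"
    using pq assms(1) by (simp only: c_def distrib_right sum.distrib sum_if_eq_mult)
  moreover have "0 \<le> c s" for s
    using pq by (simp add: c_def)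
  ultimately show ?thesis
    using pq by (intro conjI exI[of _ c]) (auto simp: fm_combine_def case_prod_beta)
qed

lemma farkas_rows:
  fixes S :: "(('j \<Rightarrow> real) \<times> real) set"
  assumes "finite J" "finite S" "\<not> lin_feasible J S"
  shows "\<exists>l. (\<forall>s\<in>S. 0 \<le> l s) \<and> (\<forall>k\<in>J. (\<Sum>s\<in>S. l s * fst s k) = 0) \<and> (\<Sum>s\<in>S. l s * snd s) < 0"
  using assms(1,2,3)
proof (induction J arbitrary: S rule: finite_induct)
  case empty
  then obtain s0 where "s0 \<in> S" "snd s0 < 0"
    by (auto simp: lin_feasible_def not_le)
  then show ?case
    using empty.prems by (intro exI[of _ "\<lambda>s. if s = s0 then 1 else 0"]) (simp add: sum_if_eq_mult)
next
  case (insert j J)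
  let ?S' = "fm_eliminate j S"
  have "\<not> lin_feasible J ?S'"
    using lin_feasible_fm_eliminate[OF insert.prems(1) insert.hyps(1,2)] insert.prems(2) by blast
  then obtain l' where l': "\<forall>s\<in>?S'. 0 \<le> l' s" "\<forall>k\<in>J. (\<Sum>s\<in>?S'. l' s * fst s k) = 0"
      "(\<Sum>s\<in>?S'. l' s * snd s) < 0"
    using insert.IH[OF finite_fm_eliminate[OF insert.prems(1)]] by blast
  have "\<forall>s'\<in>?S'. \<exists>c. (\<forall>s. 0 \<le> c s) \<and> (\<forall>k. (\<Sum>s\<in>S. c s * fst s k) = fst s' k)
      \<and> (\<Sum>s\<in>S. c s * snd s) = snd s'"
    using fm_eliminate_nonneg_combination[OF insert.prems(1)] by blast
  then obtain c where c: "\<forall>s'\<in>?S'. (\<forall>s. 0 \<le> c s' s) \<and> (\<forall>k. (\<Sum>s\<in>S. c s' s * fst s k) = fst s' k)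
      \<and> (\<Sum>s\<in>S. c s' s * snd s) = snd s'"
    by (rule bchoice[THEN exE])
  define l where "l s = (\<Sum>s'\<in>?S'. l' s' * c s' s)" for s
  have pull_back: "(\<Sum>s\<in>S. l s * f s) = (\<Sum>s'\<in>?S'. l' s' * (\<Sum>s\<in>S. c s' s * f s))" for f
  proof -
    have "(\<Sum>s\<in>S. l s * f s) = (\<Sum>s\<in>S. \<Sum>s'\<in>?S'. l' s' * (c s' s * f s))"
      unfolding l_def by (simp add: sum_distrib_right mult.assoc)
    also have "\<dots> = (\<Sum>s'\<in>?S'. \<Sum>s\<in>S. l' s' * (c s' s * f s))"
      by (rule sum.swap)
    finally show ?thesis
      by (simp add: sum_distrib_left)
  qed
  have "(\<Sum>s\<in>S. l s * fst s k) = (\<Sum>s'\<in>?S'. l' s' * fst s' k)" for k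
    unfolding pull_back using c by (intro sum.cong) auto
  moreover have "(\<Sum>s\<in>S. l s * snd s) = (\<Sum>s'\<in>?S'. l' s' * snd s')"
    unfolding pull_back using c by (intro sum.cong) auto
  moreover have "(\<Sum>s'\<in>?S'. l' s' * fst s' j) = 0"
    using fm_eliminate_nonneg_combination[OF insert.prems(1)] by simp
  moreover have "0 \<le> l s" for s
    unfolding l_def using l'(1) c by (intro sum_nonneg mult_nonneg_nonneg) blast+
  ultimately show ?case
    using l' by (intro exI[of _ l]) auto
qed

theorem farkas:
  fixes A :: "'k \<Rightarrow> 'j \<Rightarrow> real" and b :: "'k \<Rightarrow> real"
  assumes "finite J" "finite K" "\<not> (\<exists>x. \<forall>k\<in>K. (\<Sum>j\<in>J. A k j * x j) \<le> b k)"
  shows "\<exists>l. (\<forall>k\<in>K. 0 \<le> l k) \<and> (\<forall>j\<in>J. (\<Sum>k\<in>K. l k * A k j) = 0) \<and> (\<Sum>k\<in>K. l k * b k) < 0"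
proof -
  define row where "row k = (A k, b k)" for k
  have "\<not> lin_feasible J (row ` K)"
    using assms(3) by (auto simp: lin_feasible_def row_def)
  then obtain l where l: "\<forall>s\<in>row ` K. 0 \<le> l s" "\<forall>j\<in>J. (\<Sum>s\<in>row ` K. l s * fst s j) = 0"
      "(\<Sum>s\<in>row ` K. l s * snd s) < 0"
    using farkas_rows[OF assms(1)] assms(2) by blast
  \<comment> \<open>the multiplier of a row is shared among the indices producing it\<close>
  define m where "m k = l (row k) / card {k'\<in>K. row k' = row k}" for k
  have spread: "(\<Sum>k\<in>K. m k * F (row k)) = (\<Sum>s\<in>row ` K. l s * F s)" for F
  proof -
    have "(\<Sum>k\<in>{k\<in>K. row k = s}. m k * F (row k)) = l s * F s" if "s \<in> row ` K" for s
    proof -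
      have "{k\<in>K. row k = s} \<noteq> {}" "finite {k\<in>K. row k = s}"
        using that assms(2) by auto
      then show ?thesis
        by (simp add: m_def card_gt_0_iff)
    qed
    then show ?thesis
      using sum.image_gen[OF assms(2), of "\<lambda>k. m k * F (row k)" row] by simp
  qed
  show ?thesis
  proof (intro exI[of _ m] conjI ballI)
    show "0 \<le> m k" if "k \<in> K" for k
      using l(1) that by (simp add: m_def)
    show "(\<Sum>k\<in>K. m k * A k j) = 0" if "j \<in> J" for j
      using spread[of "\<lambda>s. fst s j"] l(2) that by (simp add: row_def)
    show "(\<Sum>k\<in>K. m k * b k) < 0"
      using spread[of snd] l(3) by (simp add: row_def)
  qed
qed

corollary farkas_nonneg:
  fixes A :: "'k \<Rightarrow> 'j \<Rightarrow> real" and b :: "'k \<Rightarrow> real"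
  assumes "finite J" "finite K"
    and "\<not> (\<exists>x. (\<forall>j\<in>J. 0 \<le> x j) \<and> (\<forall>k\<in>K. (\<Sum>j\<in>J. A k j * x j) \<le> b k))"
  shows "\<exists>l. (\<forall>k\<in>K. 0 \<le> l k) \<and> (\<forall>j\<in>J. (\<Sum>k\<in>K. l k * A k j) \<ge> 0) \<and> (\<Sum>k\<in>K. l k * b k) < 0"
proof -
  \<comment> \<open>the sign constraints become the extra rows \<open>- x j \<le> 0\<close>\<close>
  define A' where "A' = case_sum A (\<lambda>j' j. if j = j' then -1 else 0)"
  define b' :: "'k + 'j \<Rightarrow> real" where "b' = case_sum b (\<lambda>_. 0)"
  define K' where "K' = K <+> J"
  have sum_K': "(\<Sum>k\<in>K'. f k) = (\<Sum>k\<in>K. f (Inl k)) + (\<Sum>j\<in>J. f (Inr j))" for f :: "_ \<Rightarrow> real"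
    unfolding K'_def using assms(1,2) by (simp add: sum.Plus)
  have infeasible: "\<not> (\<exists>x. \<forall>k\<in>K'. (\<Sum>j\<in>J. A' k j * x j) \<le> b' k)"
  proof
    assume "\<exists>x. \<forall>k\<in>K'. (\<Sum>j\<in>J. A' k j * x j) \<le> b' k"
    then obtain x where x: "\<forall>k\<in>K'. (\<Sum>j\<in>J. A' k j * x j) \<le> b' k" by blast
    have "\<forall>j\<in>J. 0 \<le> x j"
    proof
      fix j assume j: "j \<in> J"
      have "(\<Sum>j'\<in>J. A' (Inr j) j' * x j') \<le> b' (Inr j)"
        using bspec[OF x, of "Inr j"] j by (simp add: K'_def Plus_def)
      then show "0 \<le> x j"
        using j assms(1) by (simp add: A'_def b'_def sum_if_eq_mult)
    qed
    moreover have "\<forall>k\<in>K. (\<Sum>j\<in>J. A k j * x j) \<le> b k"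
    proof
      fix k assume "k \<in> K"
      then show "(\<Sum>j\<in>J. A k j * x j) \<le> b k"
        using bspec[OF x, of "Inl k"] by (simp add: K'_def Plus_def A'_def b'_def)
    qed
    ultimately show False
      using assms(3) by blast
  qed
  then obtain l where l: "\<forall>k\<in>K'. 0 \<le> l k" "\<forall>j\<in>J. (\<Sum>k\<in>K'. l k * A' k j) = 0"
      "(\<Sum>k\<in>K'. l k * b' k) < 0"
    using farkas[OF assms(1) _ infeasible] assms(1,2) by (auto simp: K'_def Plus_def)
  have "(\<Sum>k\<in>K. l (Inl k) * A k j) = l (Inr j)" if "j \<in> J" for j
  proof -
    have "(\<Sum>j'\<in>J. l (Inr j') * A' (Inr j') j) = (\<Sum>j'\<in>J. if j = j' then - l (Inr j') else 0)"
      by (intro sum.cong) (auto simp: A'_def)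
    also have "\<dots> = - l (Inr j)"
      using that assms(1) by simp
    finally have "(\<Sum>j'\<in>J. l (Inr j') * A' (Inr j') j) = - l (Inr j)" .
    then show ?thesis
      using bspec[OF l(2) that] by (simp add: sum_K' A'_def)
  qed
  moreover have "(\<Sum>k\<in>K. l (Inl k) * b k) < 0"
    using l(3) by (simp add: sum_K' b'_def)
  moreover have "\<forall>k\<in>K. 0 \<le> l (Inl k)" "\<forall>j\<in>J. 0 \<le> l (Inr j)"
    using l(1) by (auto simp: K'_def Plus_def)
  ultimately show ?thesis
    by (intro exI[of _ "l \<circ> Inl"]) auto
qed

section \<open>Kantorovich duality for the Hamming distance\<close>

lemma finite_words: "finite (words n :: (nat \<Rightarrow> 'a::finite) set)"
  unfolding words_def by (intro finite_PiE) auto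

lemma words_nonempty: "words n \<noteq> {}"
  unfolding words_def by (simp add: PiE_eq_empty_iff)

lemma hamming_nonneg: "0 \<le> hamming n x y"
  unfolding hamming_def by simp

lemma hamming_self [simp]: "hamming n x x = 0"
  unfolding hamming_def by simp

lemma hamming_le_1: "hamming n x y \<le> 1"
proof -
  have "card {i. i < n \<and> x i \<noteq> y i} \<le> n"
    using card_mono[of "{..<n}" "{i. i < n \<and> x i \<noteq> y i}"] by auto
  then show ?thesis
    unfolding hamming_def by (cases "n = 0") (auto simp: divide_le_eq)
qed

lemma hamming_triangle: "hamming n x z \<le> hamming n x y + hamming n y z"
proof -
  have "{i. i < n \<and> x i \<noteq> z i} \<subseteq> {i. i < n \<and> x i \<noteq> y i} \<union> {i. i < n \<and> y i \<noteq> z i}"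
    by auto
  then have "card {i. i < n \<and> x i \<noteq> z i} \<le> card ({i. i < n \<and> x i \<noteq> y i} \<union> {i. i < n \<and> y i \<noteq> z i})"
    by (intro card_mono) auto
  also have "\<dots> \<le> card {i. i < n \<and> x i \<noteq> y i} + card {i. i < n \<and> y i \<noteq> z i}"
    by (rule card_Un_le)
  finally show ?thesis
    unfolding hamming_def by (simp add: add_divide_distrib[symmetric] divide_right_mono)
qed

lemma sum_le_sum_imp_eq:
  fixes f g :: "'b \<Rightarrow> real"
  assumes "finite A" "\<forall>a\<in>A. f a \<le> g a" "sum g A \<le> sum f A" "a \<in> A"
  shows "f a = g a"
  using sum_strict_mono_ex1[OF assms(1,2)] assms(2-4) by fastforce

lemma sum_diff_product_measure:
  fixes \<nu> \<mu> :: "'b \<Rightarrow> real"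
  assumes "sum \<nu> W = 1" "sum \<mu> W = 1"
  shows "(\<Sum>x\<in>W. \<Sum>y\<in>W. (f x - g y) * \<nu> x * \<mu> y) = (\<Sum>x\<in>W. f x * \<nu> x) - (\<Sum>y\<in>W. g y * \<mu> y)"
proof -
  have "(\<Sum>y\<in>W. (f x - g y) * \<nu> x * \<mu> y) = (\<Sum>y\<in>W. f x * \<nu> x * \<mu> y - \<nu> x * (g y * \<mu> y))" for x
    by (intro sum.cong) (auto simp: algebra_simps)
  also have "\<dots> x = f x * \<nu> x - \<nu> x * (\<Sum>y\<in>W. g y * \<mu> y)" for x
    using assms(2) by (simp add: sum_subtractf sum_distrib_left[symmetric])
  finally show ?thesis
    using assms(1) by (simp add: sum_subtractf sum_distrib_right[symmetric])
qed

lemma Min_plus_dist_lipschitz: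
  fixes w :: "'b \<Rightarrow> real" and d :: "'b \<Rightarrow> 'b \<Rightarrow> real"
  assumes "finite W" "W \<noteq> {}" "x \<in> W" "y \<in> W"
    and triangle: "\<forall>x\<in>W. \<forall>y\<in>W. \<forall>z\<in>W. d x z \<le> d x y + d y z"
  shows "Min ((\<lambda>z. w z + d z y) ` W) \<le> Min ((\<lambda>z. w z + d z x) ` W) + d x y"
proof -
  have "Min ((\<lambda>z. w z + d z x) ` W) \<in> (\<lambda>z. w z + d z x) ` W"
    using assms(1,2) by (intro Min_in) auto
  then obtain z where z: "z \<in> W" "Min ((\<lambda>z. w z + d z x) ` W) = w z + d z x"
    by auto
  have "Min ((\<lambda>z. w z + d z y) ` W) \<le> w z + d z y"
    using assms(1) z(1) by (intro Min_le) auto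
  also have "\<dots> \<le> w z + d z x + d x y"
    using triangle z(1) assms(3,4) by force
  finally show ?thesis
    using z(2) by simp
qed

lemma lipschitz_potential_of_dual:
  fixes d :: "'b \<Rightarrow> 'b \<Rightarrow> real"
  assumes W: "finite W" "W \<noteq> {}"
    and d: "\<forall>x\<in>W. d x x = 0" "\<forall>x\<in>W. \<forall>y\<in>W. \<forall>z\<in>W. d x z \<le> d x y + d y z"
    and \<nu>: "\<forall>x\<in>W. 0 \<le> \<nu> x" "sum \<nu> W = 1" and \<mu>: "\<forall>x\<in>W. 0 \<le> \<mu> x" "sum \<mu> W = 1"
    and dual: "\<forall>x\<in>W. \<forall>y\<in>W. v y \<le> u x + \<beta> * d x y" "0 \<le> \<beta>"
    and lt: "(\<Sum>x\<in>W. u x * \<nu> x) - (\<Sum>y\<in>W. v y * \<mu> y) + \<beta> * c < 0"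
  shows "\<exists>h. (\<forall>x\<in>W. \<forall>y\<in>W. h x - h y \<le> d x y) \<and> c < (\<Sum>x\<in>W. h x * \<nu> x) - (\<Sum>x\<in>W. h x * \<mu> x)"
proof (cases "\<beta> = 0")
  case True
  \<comment> \<open>then \<open>v \<le> u\<close> pointwise, so the product of \<open>\<nu>\<close> and \<open>\<mu>\<close> contradicts \<open>lt\<close>\<close>
  have "0 \<le> (\<Sum>x\<in>W. \<Sum>y\<in>W. (u x - v y) * \<nu> x * \<mu> y)"
    using dual \<nu> \<mu> True by (intro sum_nonneg mult_nonneg_nonneg) auto
  then show ?thesis
    using lt True sum_diff_product_measure[OF \<nu>(2) \<mu>(2)] by simp
next
  case False
  then have \<beta>: "\<beta> > 0" using dual(2) by simp
  define \<phi> where "\<phi> y = Min ((\<lambda>x. u x / \<beta> + d x y) ` W)" for y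
  have "\<phi> x \<le> u x / \<beta>" if "x \<in> W" for x
    using W that d(1) unfolding \<phi>_def by (intro Min_le) force+
  then have "(\<Sum>x\<in>W. \<phi> x * \<nu> x) \<le> (\<Sum>x\<in>W. u x / \<beta> * \<nu> x)"
    using \<nu>(1) by (intro sum_mono mult_right_mono) auto
  then have \<nu>_bound: "(\<Sum>x\<in>W. \<phi> x * \<nu> x) \<le> (\<Sum>x\<in>W. u x * \<nu> x) / \<beta>"
    by (simp add: sum_divide_distrib)
  have "v y / \<beta> \<le> \<phi> y" if "y \<in> W" for y
  proof -
    have "v y / \<beta> \<le> u x / \<beta> + d x y" if "x \<in> W" for x
    proof -
      have "v y / \<beta> \<le> (u x + \<beta> * d x y) / \<beta>"
        using dual(1) \<open>x \<in> W\<close> \<open>y \<in> W\<close> \<beta> by (intro divide_right_mono) auto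
      then show ?thesis
        using \<beta> by (simp add: add_divide_distrib)
    qed
    then show ?thesis
      using W unfolding \<phi>_def by (simp add: Min_ge_iff)
  qed
  then have "(\<Sum>y\<in>W. v y / \<beta> * \<mu> y) \<le> (\<Sum>y\<in>W. \<phi> y * \<mu> y)"
    using \<mu>(1) by (intro sum_mono mult_right_mono) auto
  then have \<mu>_bound: "(\<Sum>y\<in>W. v y * \<mu> y) / \<beta> \<le> (\<Sum>y\<in>W. \<phi> y * \<mu> y)"
    by (simp add: sum_divide_distrib)
  have "((\<Sum>x\<in>W. u x * \<nu> x) - (\<Sum>y\<in>W. v y * \<mu> y)) / \<beta> < - c"
    using lt \<beta> by (simp add: divide_less_eq mult.commute[of c])
  then have "c < (\<Sum>x\<in>W. - \<phi> x * \<nu> x) - (\<Sum>x\<in>W. - \<phi> x * \<mu> x)"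
    using \<nu>_bound \<mu>_bound by (simp add: sum_negf diff_divide_distrib)
  moreover have "\<phi> y - \<phi> x \<le> d x y" if "x \<in> W" "y \<in> W" for x y
    using Min_plus_dist_lipschitz[OF W that d(2), where w = "\<lambda>x. u x / \<beta>"] unfolding \<phi>_def by simp
  ultimately show ?thesis
    by (intro exI[of _ "\<lambda>x. - \<phi> x"]) simp
qed

text \<open>The transport problem as a linear program in the plan \<open>\<pi> \<ge> 0\<close> on pairs of words:
  row sums at most \<open>\<nu>\<close>, column sums at least \<open>\<mu>\<close>, and cost at most \<open>c\<close>. Since both
  marginals have mass one, the two one-sided constraints force a coupling.\<close>

datatype 'w transport_row = Supply 'w | Demand 'w | Budget

definition transport_rows :: "'w set \<Rightarrow> 'w transport_row set" where
  "transport_rows W = Supply ` W \<union> Demand ` W \<union> {Budget}"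

fun transport_coeff :: "nat \<Rightarrow> (nat \<Rightarrow> 'a) transport_row \<Rightarrow> (nat \<Rightarrow> 'a) \<times> (nat \<Rightarrow> 'a) \<Rightarrow> real" where
  "transport_coeff n (Supply x) z = (if fst z = x then 1 else 0)"
| "transport_coeff n (Demand y) z = (if snd z = y then -1 else 0)"
| "transport_coeff n Budget z = hamming n (fst z) (snd z)"

fun transport_bound :: "((nat \<Rightarrow> 'a) \<Rightarrow> real) \<Rightarrow> ((nat \<Rightarrow> 'a) \<Rightarrow> real) \<Rightarrow> real
    \<Rightarrow> (nat \<Rightarrow> 'a) transport_row \<Rightarrow> real" where
  "transport_bound \<nu> \<mu> c (Supply x) = \<nu> x"
| "transport_bound \<nu> \<mu> c (Demand y) = - \<mu> y"
| "transport_bound \<nu> \<mu> c Budget = c"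

lemma sum_transport_rows:
  fixes f :: "'w transport_row \<Rightarrow> real"
  assumes "finite W"
  shows "(\<Sum>k\<in>transport_rows W. f k) = (\<Sum>x\<in>W. f (Supply x)) + (\<Sum>y\<in>W. f (Demand y)) + f Budget"
proof -
  have "(\<Sum>k\<in>transport_rows W. f k) = (\<Sum>k\<in>Supply ` W. f k) + (\<Sum>k\<in>Demand ` W. f k) + f Budget"
    unfolding transport_rows_def using assms
    by (subst sum.union_disjoint, auto)+
  also have "\<dots> = (\<Sum>x\<in>W. f (Supply x)) + (\<Sum>y\<in>W. f (Demand y)) + f Budget"
    by (simp add: sum.reindex inj_on_def)
  finally show ?thesis .
qed

lemma sum_transport_coeff_Supply:
  assumes "finite W" "x \<in> W"
  shows "(\<Sum>z\<in>W \<times> W. transport_coeff n (Supply x) z * f z) = (\<Sum>y\<in>W. f (x, y))"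
proof -
  have "(\<Sum>z\<in>W \<times> W. transport_coeff n (Supply x) z * f z) = (\<Sum>x'\<in>W. if x' = x then \<Sum>y\<in>W. f (x', y) else 0)"
    unfolding sum.cartesian_product' by (intro sum.cong) auto
  then show ?thesis
    using assms by simp
qed

lemma sum_transport_coeff_Demand:
  assumes "finite W" "y \<in> W"
  shows "(\<Sum>z\<in>W \<times> W. transport_coeff n (Demand y) z * f z) = - (\<Sum>x\<in>W. f (x, y))"
proof -
  have "(\<Sum>z\<in>W \<times> W. transport_coeff n (Demand y) z * f z) = (\<Sum>x\<in>W. \<Sum>y'\<in>W. if y' = y then - f (x, y') else 0)"
    unfolding sum.cartesian_product' by (intro sum.cong) auto
  then show ?thesis
    using assms by (simp add: sum_negf)
qed

lemma transport_dist_le_cost: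
  assumes "coupling n \<pi> \<nu> \<mu>"
  shows "transport_dist n \<nu> \<mu> \<le> (\<Sum>z\<in>words n \<times> words n. \<pi> z * hamming n (fst z) (snd z))"
  unfolding transport_dist_def
proof (rule cInf_lower)
  show "bdd_below {\<Sum>z\<in>words n \<times> words n. \<pi> z * hamming n (fst z) (snd z) |\<pi>. coupling n \<pi> \<nu> \<mu>}"
    by (rule bdd_belowI[of _ 0])
      (auto simp: coupling_def intro!: sum_nonneg mult_nonneg_nonneg hamming_nonneg)
qed (use assms in blast)

lemma coupling_of_feasible_plan:
  fixes n :: nat and \<pi> :: "(nat \<Rightarrow> 'a::finite) \<times> (nat \<Rightarrow> 'a) \<Rightarrow> real"
  defines "W \<equiv> words n :: (nat \<Rightarrow> 'a) set"
  assumes \<nu>: "is_prob n \<nu>" and \<mu>: "is_prob n \<mu>" and nonneg: "\<forall>z\<in>W \<times> W. 0 \<le> \<pi> z"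
    and rows: "\<forall>x\<in>W. (\<Sum>y\<in>W. \<pi> (x, y)) \<le> \<nu> x"
    and cols: "\<forall>y\<in>W. \<mu> y \<le> (\<Sum>x\<in>W. \<pi> (x, y))"
  shows "coupling n (\<lambda>z. if z \<in> W \<times> W then \<pi> z else 0) \<nu> \<mu>"
proof -
  have finW: "finite W"
    unfolding W_def by (rule finite_words)
  have "(\<Sum>x\<in>W. \<Sum>y\<in>W. \<pi> (x, y)) \<le> 1"
    using sum_mono[of W _ \<nu>] rows \<nu> by (force simp: W_def is_prob_def)
  moreover have "1 \<le> (\<Sum>y\<in>W. \<Sum>x\<in>W. \<pi> (x, y))"
    using sum_mono[of W \<mu>] cols \<mu> by (force simp: W_def is_prob_def)
  ultimately have total: "(\<Sum>x\<in>W. \<Sum>y\<in>W. \<pi> (x, y)) = 1" "(\<Sum>y\<in>W. \<Sum>x\<in>W. \<pi> (x, y)) = 1"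
    using sum.swap[of "\<lambda>x y. \<pi> (x, y)" W W] by linarith+
  have "(\<Sum>y\<in>W. \<pi> (x, y)) = \<nu> x" if "x \<in> W" for x
    using sum_le_sum_imp_eq[OF finW rows _ that] total(1) \<nu> by (simp add: W_def is_prob_def)
  moreover have "\<mu> y = (\<Sum>x\<in>W. \<pi> (x, y))" if "y \<in> W" for y
    using sum_le_sum_imp_eq[OF finW cols _ that] total(2) \<mu> by (simp add: W_def is_prob_def)
  ultimately show ?thesis
    using nonneg unfolding coupling_def W_def by auto
qed

lemma sum_transport_rows_coeff:
  assumes "finite W" "x \<in> W" "y \<in> W"
  shows "(\<Sum>k\<in>transport_rows W. l k * transport_coeff n k (x, y))
    = l (Supply x) - l (Demand y) + l Budget * hamming n x y"
  using assms by (simp add: sum_transport_rows if_distrib[of "\<lambda>c. _ * c"] cong: if_cong)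

lemma sum_transport_rows_bound:
  assumes "finite W"
  shows "(\<Sum>k\<in>transport_rows W. l k * transport_bound \<nu> \<mu> c k)
    = (\<Sum>x\<in>W. l (Supply x) * \<nu> x) - (\<Sum>y\<in>W. l (Demand y) * \<mu> y) + l Budget * c"
  using assms by (simp add: sum_transport_rows sum_negf)

lemma transport_plan_infeasible:
  fixes n :: nat and \<nu> \<mu> :: "(nat \<Rightarrow> 'a::finite) \<Rightarrow> real"
  defines "W \<equiv> words n :: (nat \<Rightarrow> 'a) set"
  assumes \<nu>: "is_prob n \<nu>" and \<mu>: "is_prob n \<mu>" and gt: "c < transport_dist n \<nu> \<mu>"
  shows "\<not> (\<exists>\<pi>. (\<forall>z\<in>W \<times> W. 0 \<le> \<pi> z) \<and> (\<forall>k\<in>transport_rows W.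
      (\<Sum>z\<in>W \<times> W. transport_coeff n k z * \<pi> z) \<le> transport_bound \<nu> \<mu> c k))"
proof
  assume "\<exists>\<pi>. (\<forall>z\<in>W \<times> W. 0 \<le> \<pi> z) \<and> (\<forall>k\<in>transport_rows W.
    (\<Sum>z\<in>W \<times> W. transport_coeff n k z * \<pi> z) \<le> transport_bound \<nu> \<mu> c k)"
  then obtain \<pi> where nonneg: "\<forall>z\<in>W \<times> W. 0 \<le> \<pi> z" and feasible: "\<forall>k\<in>transport_rows W.
    (\<Sum>z\<in>W \<times> W. transport_coeff n k z * \<pi> z) \<le> transport_bound \<nu> \<mu> c k"
    by blast
  have finW: "finite W"
    unfolding W_def by (rule finite_words)
  have "\<forall>x\<in>W. (\<Sum>y\<in>W. \<pi> (x, y)) \<le> \<nu> x"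
  proof
    fix x assume "x \<in> W"
    then show "(\<Sum>y\<in>W. \<pi> (x, y)) \<le> \<nu> x"
      using bspec[OF feasible, of "Supply x"] sum_transport_coeff_Supply[OF finW, of x n \<pi>]
      by (simp add: transport_rows_def)
  qed
  moreover have "\<forall>y\<in>W. \<mu> y \<le> (\<Sum>x\<in>W. \<pi> (x, y))"
  proof
    fix y assume "y \<in> W"
    then show "\<mu> y \<le> (\<Sum>x\<in>W. \<pi> (x, y))"
      using bspec[OF feasible, of "Demand y"] sum_transport_coeff_Demand[OF finW, of y n \<pi>]
      by (simp add: transport_rows_def)
  qed
  moreover have cost: "(\<Sum>z\<in>W \<times> W. hamming n (fst z) (snd z) * \<pi> z) \<le> c"
    using bspec[OF feasible, of Budget] by (simp add: transport_rows_def)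
  ultimately have "coupling n (\<lambda>z. if z \<in> W \<times> W then \<pi> z else 0) \<nu> \<mu>"
    using coupling_of_feasible_plan[OF \<nu> \<mu>] nonneg unfolding W_def by blast
  from transport_dist_le_cost[OF this] cost gt show False
    unfolding W_def by (simp add: mult.commute)
qed

theorem kantorovich_duality:
  fixes \<nu> \<mu> :: "(nat \<Rightarrow> 'a::finite) \<Rightarrow> real"
  assumes \<nu>: "is_prob n \<nu>" and \<mu>: "is_prob n \<mu>" and gt: "c < transport_dist n \<nu> \<mu>"
  shows "\<exists>h. (\<forall>x\<in>words n. \<forall>y\<in>words n. h x - h y \<le> hamming n x y)
     \<and> c < (\<Sum>x\<in>words n. h x * \<nu> x) - (\<Sum>x\<in>words n. h x * \<mu> x)"
proof -
  define W where "W = (words n :: (nat \<Rightarrow> 'a) set)"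
  have finW: "finite W" and "W \<noteq> {}" and "finite (transport_rows W)"
    unfolding W_def transport_rows_def by (simp_all add: finite_words words_nonempty)
  then obtain l where l: "\<forall>k\<in>transport_rows W. 0 \<le> l k"
      "\<forall>z\<in>W \<times> W. 0 \<le> (\<Sum>k\<in>transport_rows W. l k * transport_coeff n k z)"
      "(\<Sum>k\<in>transport_rows W. l k * transport_bound \<nu> \<mu> c k) < 0"
    using farkas_nonneg[OF _ _ transport_plan_infeasible[OF \<nu> \<mu> gt]] unfolding W_def by blast
  have "l (Demand y) \<le> l (Supply x) + l Budget * hamming n x y" if "x \<in> W" "y \<in> W" for x y
    using bspec[OF l(2), of "(x, y)"] sum_transport_rows_coeff[OF finW that, of l n] that by simp
  then have "\<forall>x\<in>W. \<forall>y\<in>W. l (Demand y) \<le> l (Supply x) + l Budget * hamming n x y"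
    by blast
  moreover have "(\<Sum>x\<in>W. l (Supply x) * \<nu> x) - (\<Sum>y\<in>W. l (Demand y) * \<mu> y) + l Budget * c < 0"
    using l(3) finW by (simp add: sum_transport_rows_bound)
  moreover have "0 \<le> l Budget"
    using l(1) by (simp add: transport_rows_def)
  ultimately show ?thesis
    using lipschitz_potential_of_dual[OF finW \<open>W \<noteq> {}\<close>, where u = "\<lambda>x. l (Supply x)"
        and v = "\<lambda>y. l (Demand y)" and \<beta> = "l Budget" and d = "hamming n" and \<nu> = \<nu> and \<mu> = \<mu>]
      \<nu> \<mu> unfolding W_def by (simp add: is_prob_def hamming_triangle)
qed

section \<open>Exponential moments\<close>

definition mgf :: "'b set \<Rightarrow> ('b \<Rightarrow> real) \<Rightarrow> ('b \<Rightarrow> real) \<Rightarrow> real \<Rightarrow> real" where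
  "mgf W \<mu> g t = (\<Sum>x\<in>W. \<mu> x * exp (t * g x))"

definition mgf_deriv :: "'b set \<Rightarrow> ('b \<Rightarrow> real) \<Rightarrow> ('b \<Rightarrow> real) \<Rightarrow> real \<Rightarrow> real" where
  "mgf_deriv W \<mu> g t = (\<Sum>x\<in>W. \<mu> x * (g x * exp (t * g x)))"

lemma has_real_derivative_mgf: "(mgf W \<mu> g has_real_derivative mgf_deriv W \<mu> g t) (at t)"
  unfolding mgf_def mgf_deriv_def by (auto intro!: derivative_eq_intros simp: algebra_simps)

lemma exists_pos_prob:
  fixes \<mu> :: "'b \<Rightarrow> real"
  assumes "\<forall>x\<in>W. 0 \<le> \<mu> x" "sum \<mu> W = 1"
  obtains x where "x \<in> W" "\<mu> x > 0"
proof -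
  have "\<not> (\<forall>x\<in>W. \<mu> x = 0)"
  proof
    assume "\<forall>x\<in>W. \<mu> x = 0"
    then have "sum \<mu> W = 0" by (rule sum.neutral)
    with assms(2) show False by simp
  qed
  then obtain x where "x \<in> W" "\<mu> x \<noteq> 0"
    by blast
  with assms(1) show thesis
    using that by (auto simp: less_le)
qed

lemma mgf_pos:
  assumes "finite W" "\<forall>x\<in>W. 0 \<le> \<mu> x" "sum \<mu> W = 1"
  shows "mgf W \<mu> g t > 0"
proof -
  obtain x where "x \<in> W" "\<mu> x > 0"
    using exists_pos_prob assms(2,3) by blast
  then have "0 < \<mu> x * exp (t * g x)" by simp
  also have "\<dots> \<le> mgf W \<mu> g t"
    unfolding mgf_def using assms(1,2) \<open>x \<in> W\<close> by (intro member_le_sum) auto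
  finally show ?thesis .
qed

lemma exp_le_quadratic:
  fixes y :: real
  assumes "y \<le> 0"
  shows "exp y \<le> 1 + y + y\<^sup>2 / 2"
proof -
  define f where "f x = 1 + x + x\<^sup>2 / 2 - exp x" for x :: real
  have "f 0 \<le> f y"
  proof (rule DERIV_nonpos_imp_nonincreasing[OF assms])
    fix x :: real
    have "DERIV f x :> 1 + x - exp x"
      unfolding f_def by (auto intro!: derivative_eq_intros simp: power2_eq_square)
    moreover have "1 + x - exp x \<le> 0"
      using exp_ge_add_one_self[of x] by simp
    ultimately show "\<exists>y. DERIV f x :> y \<and> y \<le> 0" by blast
  qed
  then show ?thesis by (simp add: f_def)
qed

lemma ln_mgf_le_quadratic:
  assumes "finite W" "\<forall>x\<in>W. 0 \<le> \<mu> x" "sum \<mu> W = 1" "\<forall>x\<in>W. -1 \<le> g x \<and> g x \<le> 0" "0 \<le> t"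
  shows "ln (mgf W \<mu> g t) \<le> t * (\<Sum>x\<in>W. \<mu> x * g x) + t\<^sup>2 / 2"
proof -
  have "exp (t * g x) \<le> 1 + t * g x + t\<^sup>2 / 2" if "x \<in> W" for x
  proof -
    have "(g x)\<^sup>2 \<le> 1"
      using assms(4) that by (simp add: abs_square_le_1)
    then have "t * g x \<le> 0" "(t * g x)\<^sup>2 \<le> t\<^sup>2"
      using assms(4,5) that mult_left_mono[of "(g x)\<^sup>2" 1 "t\<^sup>2"]
      by (auto simp: mult_nonneg_nonpos power_mult_distrib)
    then show ?thesis
      using exp_le_quadratic[of "t * g x"] by simp
  qed
  then have "mgf W \<mu> g t \<le> (\<Sum>x\<in>W. \<mu> x * (1 + t * g x + t\<^sup>2 / 2))"
    unfolding mgf_def using assms(2) by (intro sum_mono mult_left_mono) auto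
  also have "\<dots> = 1 + t * (\<Sum>x\<in>W. \<mu> x * g x) + t\<^sup>2 / 2"
    using assms(3) by (simp add: algebra_simps sum.distrib sum_distrib_left sum_distrib_right[symmetric])
  finally show ?thesis
    using ln_le_minus_one[OF mgf_pos[OF assms(1-3), of g t]] by simp
qed

lemma has_real_derivative_ln_mgf_over_t:
  assumes "finite W" "\<forall>x\<in>W. 0 \<le> \<mu> x" "sum \<mu> W = 1" "t > 0"
  shows "((\<lambda>s. ln (mgf W \<mu> g s) / s) has_real_derivative
           (t * mgf_deriv W \<mu> g t / mgf W \<mu> g t - ln (mgf W \<mu> g t)) / t\<^sup>2) (at t)"
proof -
  have "((\<lambda>s. ln (mgf W \<mu> g s)) has_real_derivative mgf_deriv W \<mu> g t / mgf W \<mu> g t) (at t)"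
    using DERIV_chain2[OF DERIV_ln[OF mgf_pos[OF assms(1-3)]] has_real_derivative_mgf]
    by (simp add: divide_inverse mult.commute)
  from DERIV_divide[OF this DERIV_ident] assms(4) show ?thesis
    by (simp add: power2_eq_square field_simps)
qed

text \<open>The ratio \<open>H t = ln (mgf t) / t\<close> has derivative \<open>(t mgf' / mgf - ln mgf) / t\<^sup>2\<close>.
  The hypothesis says \<open>H \<kappa> > m + r\<close> while the quadratic bound gives \<open>H r \<le> m + r / 2\<close>,
  so by the mean value theorem the derivative is large somewhere in \<open>[r, \<kappa>]\<close>.\<close>

lemma exists_tilt_with_large_gap:
  fixes \<mu> g :: "'b \<Rightarrow> real"
  assumes W: "finite W" "\<forall>x\<in>W. 0 \<le> \<mu> x" "sum \<mu> W = 1"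
    and g: "\<forall>x\<in>W. -1 \<le> g x \<and> g x \<le> 0" and "0 < \<kappa>" "0 < r"
    and big: "\<kappa> * ((\<Sum>x\<in>W. \<mu> x * g x) + r) < ln (mgf W \<mu> g \<kappa>)"
  shows "\<exists>t. r \<le> t \<and> t \<le> \<kappa> \<and>
    r / (2 * \<kappa>) * t\<^sup>2 \<le> t * mgf_deriv W \<mu> g t / mgf W \<mu> g t - ln (mgf W \<mu> g t)"
proof -
  define m where "m = (\<Sum>x\<in>W. \<mu> x * g x)"
  define H where "H t = ln (mgf W \<mu> g t) / t" for t
  define gap where "gap t = t * mgf_deriv W \<mu> g t / mgf W \<mu> g t - ln (mgf W \<mu> g t)" for t
  have "\<kappa> * (m + r) < \<kappa> * m + \<kappa>\<^sup>2 / 2"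
    using ln_mgf_le_quadratic[OF W g, of \<kappa>] big \<open>0 < \<kappa>\<close> unfolding m_def by linarith
  then have "\<kappa> * r < \<kappa>\<^sup>2 / 2"
    by (simp add: distrib_left)
  then have "r < \<kappa>"
    using \<open>0 < \<kappa>\<close> \<open>0 < r\<close> by (simp add: power2_eq_square)
  moreover have "(H has_real_derivative gap s / s\<^sup>2) (at s)" if "r \<le> s" for s
    using has_real_derivative_ln_mgf_over_t[OF W, of s g] \<open>0 < r\<close> that
    unfolding H_def gap_def by simp
  ultimately obtain t where t: "r < t" "t < \<kappa>" "H \<kappa> - H r = (\<kappa> - r) * (gap t / t\<^sup>2)"
    using MVT2[of r \<kappa> H "\<lambda>s. gap s / s\<^sup>2"] by blast
  have "m + r < H \<kappa>"
    using big \<open>0 < \<kappa>\<close> by (simp add: H_def m_def field_simps)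
  moreover have "H r \<le> m + r / 2"
    using ln_mgf_le_quadratic[OF W g, of r] \<open>0 < r\<close>
    by (simp add: H_def m_def field_simps power2_eq_square)
  ultimately have "r / 2 < (\<kappa> - r) * (gap t / t\<^sup>2)"
    using t(3) by linarith
  moreover have "0 < gap t / t\<^sup>2"
  proof (rule ccontr)
    assume "\<not> 0 < gap t / t\<^sup>2"
    then have "(\<kappa> - r) * (gap t / t\<^sup>2) \<le> 0"
      using \<open>r < \<kappa>\<close> by (intro mult_nonneg_nonpos) auto
    then show False
      using calculation \<open>0 < r\<close> by linarith
  qed
  ultimately have "r / 2 < \<kappa> * (gap t / t\<^sup>2)"
    using \<open>0 < r\<close> by (smt (verit, best) mult_right_mono)
  then have "r / (2 * \<kappa>) < gap t / t\<^sup>2"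
    using \<open>0 < \<kappa>\<close> by (simp add: pos_divide_less_eq mult_ac)
  then have "r / (2 * \<kappa>) * t\<^sup>2 \<le> gap t"
    using t(1) \<open>0 < r\<close> by (simp add: pos_less_divide_eq)
  then show ?thesis
    using t(1,2) unfolding gap_def by (intro exI[of _ t]) auto
qed

section \<open>Divergences and the dual total correlation\<close>

lemma one_minus_inverse_le_ln:
  fixes y :: real
  assumes "0 < y"
  shows "1 - 1 / y \<le> ln y"
  using ln_le_minus_one[of "1 / y"] assms by (simp add: ln_div)

lemma is_prob_nonneg: "is_prob n \<mu> \<Longrightarrow> 0 \<le> \<mu> x"
  by (simp add: is_prob_def)

lemma is_prob_sum: "is_prob n \<mu> \<Longrightarrow> (\<Sum>x\<in>words n. \<mu> x) = 1"
  by (simp add: is_prob_def)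

lemma KL_ge_tilt:
  fixes \<mu> \<nu> :: "(nat \<Rightarrow> 'a::finite) \<Rightarrow> real"
  assumes \<mu>: "is_prob n \<mu>" and \<nu>: "is_prob n \<nu>" and "abs_cont n \<nu> \<mu>"
  shows "t * (\<Sum>x\<in>words n. \<nu> x * g x) - ln (mgf (words n) \<mu> g t) \<le> KL n \<nu> \<mu>"
proof -
  define W where "W = (words n :: (nat \<Rightarrow> 'a) set)"
  define Z where "Z = mgf W \<mu> g t"
  have Z: "0 < Z"
    unfolding Z_def W_def using \<mu> by (intro mgf_pos finite_words) (auto simp: is_prob_def)
  have pointwise: "\<nu> x - \<mu> x * exp (t * g x) / Z \<le> \<nu> x * ln (\<nu> x / \<mu> x) - t * (\<nu> x * g x) + \<nu> x * ln Z"
    if "x \<in> W" for x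
  proof (cases "\<nu> x = 0")
    case True
    then show ?thesis
      using is_prob_nonneg[OF \<mu>, of x] Z by simp
  next
    case False
    then have "0 < \<nu> x" "0 < \<mu> x"
      using assms that is_prob_nonneg[OF \<mu>, of x] is_prob_nonneg[OF \<nu>, of x]
      by (auto simp: abs_cont_def W_def less_le)
    define y where "y = \<nu> x * Z / (\<mu> x * exp (t * g x))"
    have "0 < y" and ln_y: "ln y = ln (\<nu> x / \<mu> x) - t * g x + ln Z"
      unfolding y_def using \<open>0 < \<nu> x\<close> \<open>0 < \<mu> x\<close> Z by (simp_all add: ln_div ln_mult)
    have "\<nu> x * (1 - 1 / y) = \<nu> x - \<mu> x * exp (t * g x) / Z"
      unfolding y_def using \<open>0 < \<nu> x\<close> \<open>0 < \<mu> x\<close> Z by (simp add: field_simps)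
    moreover have "\<nu> x * (1 - 1 / y) \<le> \<nu> x * ln y"
      using one_minus_inverse_le_ln[OF \<open>0 < y\<close>] \<open>0 < \<nu> x\<close> by (intro mult_left_mono) auto
    ultimately show ?thesis
      unfolding ln_y by (simp add: algebra_simps)
  qed
  have "0 = (\<Sum>x\<in>W. \<nu> x - \<mu> x * exp (t * g x) / Z)"
    using Z is_prob_sum[OF \<nu>] unfolding W_def Z_def mgf_def
    by (simp add: sum_subtractf sum_divide_distrib[symmetric])
  also have "\<dots> \<le> (\<Sum>x\<in>W. \<nu> x * ln (\<nu> x / \<mu> x) - t * (\<nu> x * g x) + \<nu> x * ln Z)"
    by (rule sum_mono) (rule pointwise)
  also have "\<dots> = KL n \<nu> \<mu> - t * (\<Sum>x\<in>W. \<nu> x * g x) + ln Z"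
    using is_prob_sum[OF \<nu>] unfolding KL_def W_def
    by (simp add: sum.distrib sum_subtractf sum_distrib_left[symmetric] sum_distrib_right[symmetric])
  finally show ?thesis
    unfolding W_def Z_def by simp
qed

corollary KL_nonneg:
  assumes "is_prob n \<mu>" "is_prob n \<nu>" "abs_cont n \<nu> \<mu>"
  shows "0 \<le> KL n \<nu> \<mu>"
  using KL_ge_tilt[OF assms, of 0] is_prob_sum[OF assms(1)] by (simp add: mgf_def)

lemma integ_pos:
  assumes "is_prob n \<mu>" "\<forall>x\<in>words n. 0 < \<rho> x"
  shows "0 < integ n \<mu> \<rho>"
proof -
  obtain x where "x \<in> words n" "0 < \<mu> x"
    using exists_pos_prob[of "words n" \<mu>] assms(1) by (auto simp: is_prob_def)
  then have "0 < \<rho> x * \<mu> x"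
    using assms(2) by simp
  also have "\<dots> \<le> integ n \<mu> \<rho>"
    unfolding integ_def using \<open>x \<in> words n\<close> assms finite_words
    by (intro member_le_sum) (auto intro: mult_nonneg_nonneg less_imp_le simp: is_prob_def)
  finally show ?thesis .
qed

lemma integ_mult_cond_meas:
  "0 < integ n \<mu> \<rho> \<Longrightarrow> integ n \<mu> \<rho> * cond_meas n \<mu> \<rho> x = \<rho> x * \<mu> x"
  by (simp add: cond_meas_def)

lemma is_prob_cond_meas:
  assumes "is_prob n \<mu>" "\<forall>x\<in>words n. 0 \<le> \<rho> x" "0 < integ n \<mu> \<rho>"
  shows "is_prob n (cond_meas n \<mu> \<rho>)"
proof -
  have "0 \<le> \<rho> x * \<mu> x" for x
    using assms(1,2) by (cases "x \<in> words n") (auto simp: is_prob_def)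
  then show ?thesis
    using assms(1,3) unfolding is_prob_def cond_meas_def
    by (auto simp: sum_divide_distrib[symmetric] integ_def)
qed

lemma abs_cont_cond_meas: "abs_cont n (cond_meas n \<mu> \<rho>) \<mu>"
  by (simp add: abs_cont_def cond_meas_def)

lemma integ_mult_KL_cond_meas:
  assumes "0 < integ n \<mu> \<rho>"
  shows "integ n \<mu> \<rho> * KL n (cond_meas n \<mu> \<rho>) \<mu> = (\<Sum>x\<in>words n. \<rho> x * \<mu> x * ln (\<rho> x / integ n \<mu> \<rho>))"
  unfolding KL_def sum_distrib_left
proof (intro sum.cong refl)
  fix x
  show "integ n \<mu> \<rho> * (cond_meas n \<mu> \<rho> x * ln (cond_meas n \<mu> \<rho> x / \<mu> x))
      = \<rho> x * \<mu> x * ln (\<rho> x / integ n \<mu> \<rho>)"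
    using assms by (cases "\<mu> x = 0") (simp_all add: cond_meas_def)
qed

definition fiber :: "nat \<Rightarrow> nat \<Rightarrow> (nat \<Rightarrow> 'a) \<Rightarrow> (nat \<Rightarrow> 'a) set" where
  "fiber n i x = {y\<in>words n. \<forall>j. j \<noteq> i \<longrightarrow> y j = x j}"

lemma marg_off_fiber: "marg_off n i \<mu> x = (\<Sum>y\<in>fiber n i x. \<mu> y)"
  by (simp add: marg_off_def fiber_def)

lemma fiber_subset_words: "fiber n i x \<subseteq> words n"
  by (auto simp: fiber_def)

lemma finite_fiber: "finite (fiber n i (x :: nat \<Rightarrow> 'a::finite))"
  using finite_subset[OF fiber_subset_words finite_words] .

lemma self_in_fiber: "x \<in> words n \<Longrightarrow> x \<in> fiber n i x"
  by (simp add: fiber_def)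

lemma le_marg_off:
  assumes "\<forall>y\<in>words n. 0 \<le> f y" "x \<in> words n"
  shows "f x \<le> marg_off n i f (x :: nat \<Rightarrow> 'a::finite)"
  unfolding marg_off_fiber using assms fiber_subset_words[of n i x]
  by (intro member_le_sum self_in_fiber finite_fiber) auto

lemma hamming_fiber:
  assumes "i < n" "y \<in> fiber n i x"
  shows "hamming n x y \<le> 1 / real n"
proof -
  have "{k. k < n \<and> x k \<noteq> y k} \<subseteq> {i}"
    using assms by (auto simp: fiber_def)
  then have "card {k. k < n \<and> x k \<noteq> y k} \<le> 1"
    using card_mono[of "{i}"] by fastforce
  then show ?thesis
    unfolding hamming_def by (intro divide_right_mono) auto
qed

definition cond_mutual_info2 :: "nat \<Rightarrow> ((nat \<Rightarrow> 'a::finite) \<Rightarrow> real) \<Rightarrow> ((nat \<Rightarrow> 'a) \<Rightarrow> real)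
    \<Rightarrow> ((nat \<Rightarrow> 'a) \<Rightarrow> real) \<Rightarrow> nat \<Rightarrow> real" where
  "cond_mutual_info2 n \<mu> \<rho>1 \<rho>2 i = (\<Sum>x\<in>words n.
      integ n \<mu> \<rho>1 * cond_meas n \<mu> \<rho>1 x * ln ((cond_meas n \<mu> \<rho>1 x / marg_off n i (cond_meas n \<mu> \<rho>1) x)
        / (\<mu> x / marg_off n i \<mu> x))
    + integ n \<mu> \<rho>2 * cond_meas n \<mu> \<rho>2 x * ln ((cond_meas n \<mu> \<rho>2 x / marg_off n i (cond_meas n \<mu> \<rho>2) x)
        / (\<mu> x / marg_off n i \<mu> x)))"

lemma ln_mixture_split:
  fixes a1 a2 b w1 w2 w :: real
  assumes "0 < a1" "0 < a2" "0 < b" "w1 + w2 = w"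
  shows "- w1 * ln a1 - w2 * ln a2 = - w * ln b - (w1 * ln (a1 / b) + w2 * ln (a2 / b))"
  using assms by (simp add: ln_div algebra_simps flip: assms(4))

locale fuzzy_split =
  fixes n :: nat and \<mu> \<rho>1 \<rho>2 :: "(nat \<Rightarrow> 'a::finite) \<Rightarrow> real"
  assumes prob: "is_prob n \<mu>"
    and pos: "\<forall>x\<in>words n. 0 < \<rho>1 x \<and> 0 < \<rho>2 x \<and> \<rho>1 x + \<rho>2 x = 1"
begin

abbreviation "P1 \<equiv> integ n \<mu> \<rho>1"
abbreviation "P2 \<equiv> integ n \<mu> \<rho>2"
abbreviation "q1 \<equiv> cond_meas n \<mu> \<rho>1"
abbreviation "q2 \<equiv> cond_meas n \<mu> \<rho>2"

lemma P_pos: "0 < P1" "0 < P2"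
  using integ_pos[OF prob] pos by auto

lemma mixture: "x \<in> words n \<Longrightarrow> P1 * q1 x + P2 * q2 x = \<mu> x"
  using pos P_pos by (simp add: integ_mult_cond_meas distrib_right[symmetric])

lemma q_pos: "x \<in> words n \<Longrightarrow> 0 < \<mu> x \<Longrightarrow> 0 < q1 x \<and> 0 < q2 x"
  using pos P_pos by (simp add: cond_meas_def)

lemma q_nonneg: "x \<in> words n \<Longrightarrow> 0 \<le> q1 x \<and> 0 \<le> q2 x"
  using pos P_pos is_prob_nonneg[OF prob, of x]
  by (auto simp: cond_meas_def less_imp_le intro!: divide_nonneg_nonneg mult_nonneg_nonneg)

lemma q_zero: "\<mu> x = 0 \<Longrightarrow> q1 x = 0 \<and> q2 x = 0"
  by (simp add: cond_meas_def)

lemma entropy_split: "P1 * entropy n q1 + P2 * entropy n q2 = entropy n \<mu> - mutual_info2 n \<mu> \<rho>1 \<rho>2"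
proof -
  have "P1 * entropy n q1 + P2 * entropy n q2
      = (\<Sum>x\<in>words n. - (P1 * q1 x) * ln (q1 x) - (P2 * q2 x) * ln (q2 x))"
    unfolding entropy_def by (simp add: sum_distrib_left sum.distrib sum_negf algebra_simps sum_subtractf)
  also have "\<dots> = (\<Sum>x\<in>words n. - \<mu> x * ln (\<mu> x)
      - ((P1 * q1 x) * ln (q1 x / \<mu> x) + (P2 * q2 x) * ln (q2 x / \<mu> x)))"
  proof (intro sum.cong refl)
    fix x :: "nat \<Rightarrow> 'a" assume x: "x \<in> words n"
    show "- (P1 * q1 x) * ln (q1 x) - (P2 * q2 x) * ln (q2 x)
      = - \<mu> x * ln (\<mu> x) - ((P1 * q1 x) * ln (q1 x / \<mu> x) + (P2 * q2 x) * ln (q2 x / \<mu> x))"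
    proof (cases "\<mu> x = 0")
      case False
      then have "0 < \<mu> x"
        using is_prob_nonneg[OF prob, of x] by simp
      then show ?thesis
        using q_pos[OF x] mixture[OF x] by (intro ln_mixture_split) auto
    qed (simp add: q_zero)
  qed
  also have "\<dots> = entropy n \<mu> - mutual_info2 n \<mu> \<rho>1 \<rho>2"
    unfolding entropy_def mutual_info2_def KL_def
    by (simp add: sum_distrib_left sum.distrib sum_negf algebra_simps sum_subtractf)
  finally show ?thesis .
qed

lemma cond_entropy_split:
  "P1 * cond_entropy n i q1 + P2 * cond_entropy n i q2 = cond_entropy n i \<mu> - cond_mutual_info2 n \<mu> \<rho>1 \<rho>2 i"
proof -
  have "P1 * cond_entropy n i q1 + P2 * cond_entropy n i q2 = (\<Sum>x\<in>words n.
      - (P1 * q1 x) * ln (q1 x / marg_off n i q1 x) - (P2 * q2 x) * ln (q2 x / marg_off n i q2 x))"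
    unfolding cond_entropy_def by (simp add: sum_distrib_left sum.distrib sum_negf algebra_simps sum_subtractf)
  also have "\<dots> = (\<Sum>x\<in>words n. - \<mu> x * ln (\<mu> x / marg_off n i \<mu> x)
      - ((P1 * q1 x) * ln ((q1 x / marg_off n i q1 x) / (\<mu> x / marg_off n i \<mu> x))
       + (P2 * q2 x) * ln ((q2 x / marg_off n i q2 x) / (\<mu> x / marg_off n i \<mu> x))))"
  proof (intro sum.cong refl)
    fix x :: "nat \<Rightarrow> 'a" assume x: "x \<in> words n"
    show "- (P1 * q1 x) * ln (q1 x / marg_off n i q1 x) - (P2 * q2 x) * ln (q2 x / marg_off n i q2 x)
      = - \<mu> x * ln (\<mu> x / marg_off n i \<mu> x)
        - ((P1 * q1 x) * ln ((q1 x / marg_off n i q1 x) / (\<mu> x / marg_off n i \<mu> x))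
         + (P2 * q2 x) * ln ((q2 x / marg_off n i q2 x) / (\<mu> x / marg_off n i \<mu> x)))"
    proof (cases "\<mu> x = 0")
      case False
      then have "0 < \<mu> x"
        using is_prob_nonneg[OF prob, of x] by simp
      moreover have "0 < marg_off n i q1 x" "0 < marg_off n i q2 x" "0 < marg_off n i \<mu> x"
        using le_marg_off[OF _ x, of q1 i] le_marg_off[OF _ x, of q2 i] le_marg_off[OF _ x, of \<mu> i]
          q_pos[OF x \<open>0 < \<mu> x\<close>] q_nonneg is_prob_nonneg[OF prob] \<open>0 < \<mu> x\<close> by force+
      ultimately show ?thesis
        using q_pos[OF x] mixture[OF x] by (intro ln_mixture_split) auto
    qed (simp add: q_zero)
  qed
  also have "\<dots> = cond_entropy n i \<mu> - cond_mutual_info2 n \<mu> \<rho>1 \<rho>2 i"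
    unfolding cond_entropy_def cond_mutual_info2_def
    by (simp add: sum_distrib_left sum.distrib sum_negf algebra_simps sum_subtractf)
  finally show ?thesis .
qed

lemma DTC_split:
  "P1 * DTC n q1 + P2 * DTC n q2
     = DTC n \<mu> - mutual_info2 n \<mu> \<rho>1 \<rho>2 + (\<Sum>i<n. cond_mutual_info2 n \<mu> \<rho>1 \<rho>2 i)"
proof -
  have "P1 * DTC n q1 + P2 * DTC n q2 = (P1 * entropy n q1 + P2 * entropy n q2)
      - (\<Sum>i<n. P1 * cond_entropy n i q1 + P2 * cond_entropy n i q2)"
    unfolding DTC_def by (simp add: algebra_simps sum_distrib_left sum.distrib)
  then show ?thesis
    unfolding entropy_split cond_entropy_split DTC_def by (simp add: sum_subtractf)
qed

end

lemma binary_KL_le_chi_square: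
  fixes a b :: real
  assumes "0 < a" "a < 1" "0 < b" "b < 1"
  shows "a * ln (a / b) + (1 - a) * ln ((1 - a) / (1 - b)) \<le> (a - b)\<^sup>2 / (b * (1 - b))"
proof -
  have "a * ln (a / b) + (1 - a) * ln ((1 - a) / (1 - b)) \<le> a * (a / b - 1) + (1 - a) * ((1 - a) / (1 - b) - 1)"
    using assms by (intro add_mono mult_left_mono ln_le_minus_one) auto
  also have "\<dots> = (a - b)\<^sup>2 / (b * (1 - b))"
    using assms by (simp add: field_simps power2_eq_square)
  finally show ?thesis .
qed

lemma binary_KL_le:
  fixes a b d :: real
  assumes a: "0 < a" "a \<le> 1/2" and d: "0 \<le> d" "d \<le> 1/4"
    and b: "a * exp (- d) \<le> b" "b \<le> a * exp d"
  shows "a * ln (a / b) + (1 - a) * ln ((1 - a) / (1 - b)) \<le> 32 * d\<^sup>2 * a"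
proof -
  have "1 - d \<le> exp (- d)"
    using exp_ge_add_one_self[of "- d"] by simp
  then have lower: "a * (1 - d) \<le> b"
    using b(1) mult_left_mono[of "1 - d" "exp (- d)" a] a by linarith
  have "exp d \<le> 1 + 2 * d"
    using real_exp_bound_lemma[of d] d by simp
  then have upper: "b \<le> a * (1 + 2 * d)"
    using b(2) mult_left_mono[of "exp d" "1 + 2 * d" a] a by linarith
  have "a * (3 / 4) \<le> a * (1 - d)" "a * (1 + 2 * d) \<le> 1 / 2 * (3 / 2)"
    using a d by (intro mult_left_mono mult_mono; simp)+
  then have b_lower: "3 / 4 * a \<le> b" and b_upper: "b \<le> 3 / 4"
    using lower upper by linarith+
  have "0 \<le> d * a"
    using a d by simp
  then have close: "\<bar>a - b\<bar> \<le> 2 * d * a"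
    using lower upper by (simp add: abs_le_iff algebra_simps)
  have "a * ln (a / b) + (1 - a) * ln ((1 - a) / (1 - b)) \<le> (a - b)\<^sup>2 / (b * (1 - b))"
    using a b_lower b_upper by (intro binary_KL_le_chi_square) auto
  also have "\<dots> \<le> (2 * d * a)\<^sup>2 / (3 / 4 * a * (1 / 4))"
  proof (rule frac_le)
    show "(a - b)\<^sup>2 \<le> (2 * d * a)\<^sup>2"
      using power_mono[OF close, of 2] by simp
    show "3 / 4 * a * (1 / 4) \<le> b * (1 - b)"
      using b_lower b_upper a by (intro mult_mono) auto
  qed (use a in auto)
  also have "\<dots> \<le> 32 * d\<^sup>2 * a"
    using a by (simp add: field_simps power2_eq_square)
  finally show ?thesis .
qed

definition fiber_avg :: "nat \<Rightarrow> nat \<Rightarrow> ((nat \<Rightarrow> 'a) \<Rightarrow> real) \<Rightarrow> ((nat \<Rightarrow> 'a) \<Rightarrow> real) \<Rightarrow> (nat \<Rightarrow> 'a) \<Rightarrow> real" where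
  "fiber_avg n i \<mu> \<rho> x = (\<Sum>y\<in>fiber n i x. \<rho> y * \<mu> y) / (\<Sum>y\<in>fiber n i x. \<mu> y)"

lemma fiber_avg_bounds:
  assumes "\<forall>y\<in>fiber n i x. lo \<le> \<rho> y \<and> \<rho> y \<le> hi" "\<forall>y. 0 \<le> \<mu> y" "0 < (\<Sum>y\<in>fiber n i x. \<mu> y)"
  shows "lo \<le> fiber_avg n i \<mu> \<rho> x \<and> fiber_avg n i \<mu> \<rho> x \<le> hi"
proof -
  have "(\<Sum>y\<in>fiber n i x. lo * \<mu> y) \<le> (\<Sum>y\<in>fiber n i x. \<rho> y * \<mu> y)"
    "(\<Sum>y\<in>fiber n i x. \<rho> y * \<mu> y) \<le> (\<Sum>y\<in>fiber n i x. hi * \<mu> y)"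
    using assms(1,2) by (auto intro!: sum_mono mult_right_mono)
  then show ?thesis
    using assms(3) by (simp add: fiber_avg_def sum_distrib_left[symmetric] divide_simps)
qed

lemma fiber_avg_complement:
  fixes \<mu> \<rho> :: "(nat \<Rightarrow> 'a::finite) \<Rightarrow> real"
  assumes "0 < (\<Sum>y\<in>fiber n i x. \<mu> y)"
  shows "fiber_avg n i \<mu> (\<lambda>y. 1 - \<rho> y) x = 1 - fiber_avg n i \<mu> \<rho> x"
  using assms by (simp add: fiber_avg_def left_diff_distrib sum_subtractf diff_divide_distrib)

lemma cond_meas_fiber_ratio:
  assumes "0 < integ n \<mu> \<rho>" "0 < \<mu> x" "0 < (\<Sum>y\<in>fiber n i x. \<rho> y * \<mu> y)" "0 < (\<Sum>y\<in>fiber n i x. \<mu> y)"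
  shows "(cond_meas n \<mu> \<rho> x / marg_off n i (cond_meas n \<mu> \<rho>) x) / (\<mu> x / marg_off n i \<mu> x)
    = \<rho> x / fiber_avg n i \<mu> \<rho> x"
  using assms by (simp add: marg_off_fiber cond_meas_def fiber_avg_def sum_divide_distrib[symmetric])

context fuzzy_split
begin

lemma cond_mutual_info2_eq_fiber_avg:
  "cond_mutual_info2 n \<mu> \<rho>1 \<rho>2 i = (\<Sum>x\<in>words n. \<mu> x *
     (\<rho>1 x * ln (\<rho>1 x / fiber_avg n i \<mu> \<rho>1 x) + \<rho>2 x * ln (\<rho>2 x / fiber_avg n i \<mu> \<rho>2 x)))"
  unfolding cond_mutual_info2_def
proof (intro sum.cong refl)
  fix x :: "nat \<Rightarrow> 'a" assume x: "x \<in> words n"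
  show "P1 * q1 x * ln ((q1 x / marg_off n i q1 x) / (\<mu> x / marg_off n i \<mu> x))
      + P2 * q2 x * ln ((q2 x / marg_off n i q2 x) / (\<mu> x / marg_off n i \<mu> x))
    = \<mu> x * (\<rho>1 x * ln (\<rho>1 x / fiber_avg n i \<mu> \<rho>1 x) + \<rho>2 x * ln (\<rho>2 x / fiber_avg n i \<mu> \<rho>2 x))"
  proof (cases "\<mu> x = 0")
    case False
    then have "0 < \<mu> x"
      using is_prob_nonneg[OF prob, of x] by simp
    have fiber_pos: "0 < (\<Sum>y\<in>fiber n i x. \<rho> y * \<mu> y)" if "\<forall>y\<in>words n. 0 < \<rho> y" for \<rho>
    proof -
      have "0 < \<rho> x * \<mu> x"
        using that x \<open>0 < \<mu> x\<close> by simp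
      also have "\<dots> \<le> (\<Sum>y\<in>fiber n i x. \<rho> y * \<mu> y)"
        using that fiber_subset_words[of n i x] is_prob_nonneg[OF prob]
        by (intro member_le_sum self_in_fiber x finite_fiber) (auto intro: mult_nonneg_nonneg less_imp_le)
      finally show ?thesis .
    qed
    have "0 < (\<Sum>y\<in>fiber n i x. \<mu> y)"
      using le_marg_off[OF _ x, of \<mu> i] is_prob_nonneg[OF prob] \<open>0 < \<mu> x\<close>
      by (simp add: marg_off_fiber)
    moreover have "\<forall>y\<in>words n. 0 < \<rho>1 y" "\<forall>y\<in>words n. 0 < \<rho>2 y"
      using pos by auto
    ultimately have "(q1 x / marg_off n i q1 x) / (\<mu> x / marg_off n i \<mu> x) = \<rho>1 x / fiber_avg n i \<mu> \<rho>1 x"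
      "(q2 x / marg_off n i q2 x) / (\<mu> x / marg_off n i \<mu> x) = \<rho>2 x / fiber_avg n i \<mu> \<rho>2 x"
      using cond_meas_fiber_ratio[OF P_pos(1) \<open>0 < \<mu> x\<close> fiber_pos]
        cond_meas_fiber_ratio[OF P_pos(2) \<open>0 < \<mu> x\<close> fiber_pos] by blast+
    then show ?thesis
      using P_pos by (simp add: integ_mult_cond_meas algebra_simps)
  qed (simp add: q_zero)
qed

lemma cond_mutual_info2_le:
  assumes half: "\<forall>x\<in>words n. \<rho>1 x \<le> 1/2 \<and> \<rho>2 x = 1 - \<rho>1 x" and d: "0 \<le> d" "d \<le> 1/4"
    and close: "\<forall>x\<in>words n. \<forall>y\<in>fiber n i x. \<rho>1 x * exp (- d) \<le> \<rho>1 y \<and> \<rho>1 y \<le> \<rho>1 x * exp d"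
  shows "cond_mutual_info2 n \<mu> \<rho>1 \<rho>2 i \<le> 32 * d\<^sup>2 * P1"
proof -
  have "\<mu> x * (\<rho>1 x * ln (\<rho>1 x / fiber_avg n i \<mu> \<rho>1 x) + \<rho>2 x * ln (\<rho>2 x / fiber_avg n i \<mu> \<rho>2 x))
      \<le> \<mu> x * (32 * d\<^sup>2 * \<rho>1 x)" if x: "x \<in> words n" for x
  proof (cases "\<mu> x = 0")
    case False
    then have "0 < \<mu> x"
      using is_prob_nonneg[OF prob, of x] by simp
    then have S: "0 < (\<Sum>y\<in>fiber n i x. \<mu> y)"
      using le_marg_off[OF _ x, of \<mu> i] is_prob_nonneg[OF prob] by (simp add: marg_off_fiber)
    have "fiber_avg n i \<mu> \<rho>2 x = fiber_avg n i \<mu> (\<lambda>y. 1 - \<rho>1 y) x"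
      using half fiber_subset_words[of n i x] unfolding fiber_avg_def
      by (intro arg_cong2[where f = "(/)"] sum.cong) auto
    also have "\<dots> = 1 - fiber_avg n i \<mu> \<rho>1 x"
      using S by (rule fiber_avg_complement)
    finally have avg2: "fiber_avg n i \<mu> \<rho>2 x = 1 - fiber_avg n i \<mu> \<rho>1 x" .
    have "\<rho>1 x * exp (- d) \<le> fiber_avg n i \<mu> \<rho>1 x \<and> fiber_avg n i \<mu> \<rho>1 x \<le> \<rho>1 x * exp d"
      using close x is_prob_nonneg[OF prob] S by (intro fiber_avg_bounds) auto
    then have "\<rho>1 x * ln (\<rho>1 x / fiber_avg n i \<mu> \<rho>1 x)
        + (1 - \<rho>1 x) * ln ((1 - \<rho>1 x) / (1 - fiber_avg n i \<mu> \<rho>1 x)) \<le> 32 * d\<^sup>2 * \<rho>1 x"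
      using pos half x d by (intro binary_KL_le) auto
    then show ?thesis
      using half x avg2 \<open>0 < \<mu> x\<close> by (simp add: mult_left_mono)
  qed simp
  then have "cond_mutual_info2 n \<mu> \<rho>1 \<rho>2 i \<le> (\<Sum>x\<in>words n. \<mu> x * (32 * d\<^sup>2 * \<rho>1 x))"
    unfolding cond_mutual_info2_eq_fiber_avg by (rule sum_mono)
  also have "\<dots> = 32 * d\<^sup>2 * P1"
    by (simp add: integ_def sum_distrib_left mult_ac)
  finally show ?thesis .
qed

end

section \<open>Tilting along the transport potential\<close>

lemma normalize_potential:
  fixes h :: "(nat \<Rightarrow> 'a::finite) \<Rightarrow> real"
  assumes \<nu>: "is_prob n \<nu>" and \<mu>: "is_prob n \<mu>"
    and lip: "\<forall>x\<in>words n. \<forall>y\<in>words n. h x - h y \<le> hamming n x y"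
  obtains g where "\<forall>x\<in>words n. -1 \<le> g x \<and> g x \<le> 0"
    "\<forall>x\<in>words n. \<forall>y\<in>words n. g x - g y \<le> hamming n x y"
    "(\<Sum>x\<in>words n. g x * \<nu> x) - (\<Sum>x\<in>words n. g x * \<mu> x)
       = (\<Sum>x\<in>words n. h x * \<nu> x) - (\<Sum>x\<in>words n. h x * \<mu> x)"
proof -
  define M where "M = Max (h ` words n)"
  have "M \<in> h ` words n"
    unfolding M_def using finite_words words_nonempty by (intro Max_in) auto
  then obtain x0 where "x0 \<in> words n" "M = h x0"
    by blast
  moreover have "h x \<le> M" if "x \<in> words n" for x
    unfolding M_def using finite_words that by (intro Max_ge) auto
  ultimately have "-1 \<le> h x - M \<and> h x - M \<le> 0" if "x \<in> words n" for x
    using lip hamming_le_1[of n x0 x] that by fastforce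
  moreover have "(\<Sum>x\<in>words n. (h x - M) * \<nu> x) - (\<Sum>x\<in>words n. (h x - M) * \<mu> x)
      = (\<Sum>x\<in>words n. h x * \<nu> x) - (\<Sum>x\<in>words n. h x * \<mu> x)"
    using is_prob_sum[OF \<nu>] is_prob_sum[OF \<mu>]
    by (simp add: left_diff_distrib sum_subtractf sum_distrib_left[symmetric])
  ultimately show ?thesis
    using lip that[of "\<lambda>x. h x - M"] by auto
qed

lemma mgf_le_1:
  assumes "is_prob n \<mu>" "\<forall>x\<in>words n. g x \<le> 0" "0 \<le> t"
  shows "mgf (words n) \<mu> g t \<le> 1"
proof -
  have "mgf (words n) \<mu> g t \<le> (\<Sum>x\<in>words n. \<mu> x * 1)"
    unfolding mgf_def using assms
    by (intro sum_mono mult_left_mono) (auto simp: is_prob_def mult_nonneg_nonpos)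
  then show ?thesis
    using is_prob_sum[OF assms(1)] by simp
qed

lemma transport_violation_normalized_potential:
  fixes \<mu> :: "(nat \<Rightarrow> 'a::finite) \<Rightarrow> real"
  assumes \<mu>: "is_prob n \<mu>" and "\<not> transport_ineq n \<mu> \<kappa> r"
  obtains \<nu> g where "is_prob n \<nu>" "abs_cont n \<nu> \<mu>" "\<forall>x\<in>words n. -1 \<le> g x \<and> g x \<le> 0"
    "\<forall>x\<in>words n. \<forall>y\<in>words n. g x - g y \<le> hamming n x y"
    "1 / \<kappa> * KL n \<nu> \<mu> + r < (\<Sum>x\<in>words n. g x * \<nu> x) - (\<Sum>x\<in>words n. g x * \<mu> x)"
proof -
  obtain \<nu> where \<nu>: "is_prob n \<nu>" "abs_cont n \<nu> \<mu>" "1 / \<kappa> * KL n \<nu> \<mu> + r < transport_dist n \<nu> \<mu>"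
    using assms(2) unfolding transport_ineq_def by force
  obtain h where h: "\<forall>x\<in>words n. \<forall>y\<in>words n. h x - h y \<le> hamming n x y"
    "1 / \<kappa> * KL n \<nu> \<mu> + r < (\<Sum>x\<in>words n. h x * \<nu> x) - (\<Sum>x\<in>words n. h x * \<mu> x)"
    using kantorovich_duality[OF \<nu>(1) \<mu> \<nu>(3)] by blast
  obtain g where "\<forall>x\<in>words n. -1 \<le> g x \<and> g x \<le> 0" "\<forall>x\<in>words n. \<forall>y\<in>words n. g x - g y \<le> hamming n x y"
    "(\<Sum>x\<in>words n. g x * \<nu> x) - (\<Sum>x\<in>words n. g x * \<mu> x)
       = (\<Sum>x\<in>words n. h x * \<nu> x) - (\<Sum>x\<in>words n. h x * \<mu> x)"
    by (rule normalize_potential[OF \<nu>(1) \<mu> h(1)])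
  then show ?thesis
    using that[OF \<nu>(1,2)] h(2) by simp
qed

lemma transport_ineq_words_0:
  assumes \<mu>: "is_prob 0 \<mu>" and "0 \<le> \<kappa>" "0 \<le> r"
  shows "transport_ineq 0 \<mu> \<kappa> r"
proof (rule ccontr)
  assume "\<not> transport_ineq 0 \<mu> \<kappa> r"
  then obtain \<nu> g where \<nu>: "is_prob 0 \<nu>" "abs_cont 0 \<nu> \<mu>" and "\<forall>x\<in>words 0. -1 \<le> g x \<and> g x \<le> 0"
    and lip: "\<forall>x\<in>words 0. \<forall>y\<in>words 0. g x - g y \<le> hamming 0 x y"
    and violated: "1 / \<kappa> * KL 0 \<nu> \<mu> + r < (\<Sum>x\<in>words 0. g x * \<nu> x) - (\<Sum>x\<in>words 0. g x * \<mu> x)"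
    by (rule transport_violation_normalized_potential[OF \<mu>])
  have "(\<Sum>x\<in>words 0. \<Sum>y\<in>words 0. (g x - g y) * \<nu> x * \<mu> y) \<le> 0"
    using lip is_prob_nonneg[OF \<nu>(1)] is_prob_nonneg[OF \<mu>]
    by (intro sum_nonpos) (auto simp: hamming_def mult_nonpos_nonneg)
  moreover have "0 \<le> 1 / \<kappa> * KL 0 \<nu> \<mu>"
    using KL_nonneg[OF \<mu> \<nu>] \<open>0 \<le> \<kappa>\<close> by simp
  ultimately show False
    using violated sum_diff_product_measure[OF is_prob_sum[OF \<nu>(1)] is_prob_sum[OF \<mu>]] \<open>0 \<le> r\<close>
    by simp
qed

lemma ln_mgf_gt_of_violation:
  assumes \<mu>: "is_prob n \<mu>" and \<nu>: "is_prob n \<nu>" "abs_cont n \<nu> \<mu>" and "0 < \<kappa>"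
    and violated: "1 / \<kappa> * KL n \<nu> \<mu> + r < (\<Sum>x\<in>words n. g x * \<nu> x) - (\<Sum>x\<in>words n. g x * \<mu> x)"
  shows "\<kappa> * ((\<Sum>x\<in>words n. \<mu> x * g x) + r) < ln (mgf (words n) \<mu> g \<kappa>)"
proof -
  have "\<kappa> * (\<Sum>x\<in>words n. \<nu> x * g x) - ln (mgf (words n) \<mu> g \<kappa>) \<le> KL n \<nu> \<mu>"
    by (rule KL_ge_tilt[OF \<mu> \<nu>])
  moreover have "KL n \<nu> \<mu> + \<kappa> * r < \<kappa> * ((\<Sum>x\<in>words n. \<nu> x * g x) - (\<Sum>x\<in>words n. \<mu> x * g x))"
    using mult_strict_left_mono[OF violated \<open>0 < \<kappa>\<close>] \<open>0 < \<kappa>\<close>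
    by (simp add: mult.commute distrib_left)
  ultimately show ?thesis
    by (simp add: algebra_simps)
qed

lemma lt_1_of_ln_mgf_gt:
  assumes \<mu>: "is_prob n \<mu>" and g: "\<forall>x\<in>words n. -1 \<le> g x \<and> g x \<le> 0" and "0 < \<kappa>"
    and large: "\<kappa> * ((\<Sum>x\<in>words n. \<mu> x * g x) + r) < ln (mgf (words n) \<mu> g \<kappa>)"
  shows "r < 1"
proof -
  have "0 < mgf (words n) \<mu> g \<kappa>"
    using \<mu> by (intro mgf_pos finite_words) (auto simp: is_prob_def)
  moreover have "mgf (words n) \<mu> g \<kappa> \<le> 1"
    using mgf_le_1[OF \<mu>] g \<open>0 < \<kappa>\<close> by auto
  ultimately have "ln (mgf (words n) \<mu> g \<kappa>) \<le> 0"
    by simp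
  then have "\<kappa> * ((\<Sum>x\<in>words n. \<mu> x * g x) + r) < 0"
    using large by linarith
  moreover have "(\<Sum>x\<in>words n. \<mu> x * (-1)) \<le> (\<Sum>x\<in>words n. \<mu> x * g x)"
    using g is_prob_nonneg[OF \<mu>] by (intro sum_mono mult_left_mono) auto
  ultimately show ?thesis
    using \<open>0 < \<kappa>\<close> is_prob_sum[OF \<mu>] by (simp add: sum_negf mult_less_0_iff)
qed

lemma transport_violation_tilt:
  fixes \<mu> :: "(nat \<Rightarrow> 'a::finite) \<Rightarrow> real"
  assumes \<mu>: "is_prob n \<mu>" and "0 < r" and violation: "\<not> transport_ineq n \<mu> (r * real n / 200) r"
  obtains g t where "0 < n" "r < 1" "\<forall>x\<in>words n. -1 \<le> g x \<and> g x \<le> 0"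
    "\<forall>x\<in>words n. \<forall>y\<in>words n. g x - g y \<le> hamming n x y" "r \<le> t" "t \<le> r * real n / 200"
    "100 / real n * t\<^sup>2 \<le> t * mgf_deriv (words n) \<mu> g t / mgf (words n) \<mu> g t - ln (mgf (words n) \<mu> g t)"
proof -
  define \<kappa> where "\<kappa> = r * real n / 200"
  obtain \<nu> g where \<nu>: "is_prob n \<nu>" "abs_cont n \<nu> \<mu>" and g: "\<forall>x\<in>words n. -1 \<le> g x \<and> g x \<le> 0"
    and lip: "\<forall>x\<in>words n. \<forall>y\<in>words n. g x - g y \<le> hamming n x y"
    and violated: "1 / \<kappa> * KL n \<nu> \<mu> + r < (\<Sum>x\<in>words n. g x * \<nu> x) - (\<Sum>x\<in>words n. g x * \<mu> x)"
    unfolding \<kappa>_def by (rule transport_violation_normalized_potential[OF \<mu> violation])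
  have "0 < n"
  proof (rule ccontr)
    assume "\<not> 0 < n"
    then show False
      using transport_ineq_words_0[of \<mu> 0 r] \<mu> violation \<open>0 < r\<close> by simp
  qed
  then have "0 < \<kappa>"
    using \<open>0 < r\<close> by (simp add: \<kappa>_def)
  have large: "\<kappa> * ((\<Sum>x\<in>words n. \<mu> x * g x) + r) < ln (mgf (words n) \<mu> g \<kappa>)"
    by (rule ln_mgf_gt_of_violation[OF \<mu> \<nu> \<open>0 < \<kappa>\<close> violated])
  have "\<forall>x\<in>words n. 0 \<le> \<mu> x" "sum \<mu> (words n) = 1"
    using \<mu> by (auto simp: is_prob_def)
  then obtain t where "r \<le> t" "t \<le> \<kappa>"
    "r / (2 * \<kappa>) * t\<^sup>2 \<le> t * mgf_deriv (words n) \<mu> g t / mgf (words n) \<mu> g t - ln (mgf (words n) \<mu> g t)"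
    using exists_tilt_with_large_gap[OF finite_words _ _ g \<open>0 < \<kappa>\<close> \<open>0 < r\<close> large] by blast
  moreover have "r / (2 * \<kappa>) = 100 / real n"
    using \<open>0 < r\<close> \<open>0 < n\<close> by (simp add: \<kappa>_def)
  ultimately show ?thesis
    using that \<open>0 < n\<close> lt_1_of_ln_mgf_gt[OF \<mu> g \<open>0 < \<kappa>\<close> large] g lip unfolding \<kappa>_def by auto
qed

text \<open>The factor \<open>1 / 2\<close> keeps the complementary weight above \<open>1 / 2\<close>, so that the binary
  divergences in the conditional mutual informations stay quadratically small.\<close>

definition tilt_weight :: "real \<Rightarrow> ((nat \<Rightarrow> 'a) \<Rightarrow> real) \<Rightarrow> (nat \<Rightarrow> 'a) \<Rightarrow> real" where
  "tilt_weight t g x = exp (t * g x) / 2"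

definition tilt_compl :: "real \<Rightarrow> ((nat \<Rightarrow> 'a) \<Rightarrow> real) \<Rightarrow> (nat \<Rightarrow> 'a) \<Rightarrow> real" where
  "tilt_compl t g x = 1 - tilt_weight t g x"

locale tilted_partition =
  fixes n :: nat and \<mu> g :: "(nat \<Rightarrow> 'a::finite) \<Rightarrow> real" and t :: real
  assumes prob: "is_prob n \<mu>" and g_range: "\<forall>x\<in>words n. -1 \<le> g x \<and> g x \<le> 0"
    and g_lip: "\<forall>x\<in>words n. \<forall>y\<in>words n. g x - g y \<le> hamming n x y" and t_pos: "0 < t"
begin

abbreviation "w \<equiv> tilt_weight t g"
abbreviation "w' \<equiv> tilt_compl t g"

lemma weight_bounds: "x \<in> words n \<Longrightarrow> 0 < w x \<and> w x \<le> 1/2"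
  using g_range t_pos by (simp add: tilt_weight_def mult_nonneg_nonpos less_imp_le)

lemma weight_split: "x \<in> words n \<Longrightarrow> 0 < w x \<and> 0 < 1 - w x \<and> w x \<le> 1"
  using weight_bounds[of x] by auto

sublocale fuzzy_split n \<mu> w w'
  using prob weight_split by unfold_locales (auto simp: tilt_compl_def)

lemma fuzzy_partition: "fuzzy_partition2 n w w'"
  using weight_split by (auto simp: fuzzy_partition2_def tilt_compl_def less_imp_le)

lemma integ_weight: "P1 = mgf (words n) \<mu> g t / 2"
  by (simp add: integ_def mgf_def tilt_weight_def sum_divide_distrib mult.commute)

lemma integ_weight_ge: "exp (- t) / 2 \<le> P1"
proof -
  have "(\<Sum>x\<in>words n. \<mu> x * exp (- t)) \<le> mgf (words n) \<mu> g t"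
    unfolding mgf_def
  proof (intro sum_mono mult_left_mono)
    fix x :: "nat \<Rightarrow> 'a" assume "x \<in> words n"
    then have "t * (- 1) \<le> t * g x"
      using g_range t_pos by (intro mult_left_mono) auto
    then show "exp (- t) \<le> exp (t * g x)"
      by simp
  qed (use is_prob_nonneg[OF prob] in auto)
  then show ?thesis
    using is_prob_sum[OF prob] by (simp add: integ_weight sum_distrib_right[symmetric])
qed

lemma mutual_info_ge_gap:
  "P1 * (t * mgf_deriv (words n) \<mu> g t / mgf (words n) \<mu> g t - ln (mgf (words n) \<mu> g t))
     \<le> mutual_info2 n \<mu> w w'"
proof -
  define Z where "Z = mgf (words n) \<mu> g t"
  have "0 < Z"
    using P_pos by (simp add: Z_def integ_weight)
  have "0 \<le> KL n q2 \<mu>"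
    using weight_split P_pos prob
    by (intro KL_nonneg is_prob_cond_meas abs_cont_cond_meas) (auto simp: tilt_compl_def less_imp_le)
  moreover have "P1 * KL n q1 \<mu> = (\<Sum>x\<in>words n. w x * \<mu> x * ln (w x / P1))"
    using P_pos(1) by (rule integ_mult_KL_cond_meas)
  moreover have "\<dots> = (\<Sum>x\<in>words n. t / 2 * (\<mu> x * (g x * exp (t * g x))) - ln Z / 2 * (\<mu> x * exp (t * g x)))"
  proof (intro sum.cong refl)
    fix x
    have ln_ratio: "ln (w x / P1) = t * g x - ln Z"
      using \<open>0 < Z\<close> by (simp add: tilt_weight_def integ_weight Z_def[symmetric] ln_div)
    show "w x * \<mu> x * ln (w x / P1)
        = t / 2 * (\<mu> x * (g x * exp (t * g x))) - ln Z / 2 * (\<mu> x * exp (t * g x))"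
      unfolding ln_ratio by (simp add: tilt_weight_def field_simps)
  qed
  moreover have "\<dots> = t / 2 * mgf_deriv (words n) \<mu> g t - ln Z / 2 * Z"
    by (simp add: Z_def mgf_def mgf_deriv_def sum_subtractf sum_distrib_left)
  moreover have "\<dots> = P1 * (t * mgf_deriv (words n) \<mu> g t / Z - ln Z)"
    using \<open>0 < Z\<close> by (simp add: integ_weight Z_def[symmetric] field_simps)
  ultimately show ?thesis
    unfolding mutual_info2_def Z_def using P_pos by (simp add: mult_nonneg_nonneg)
qed

lemma weight_fiber_close:
  assumes "i < n" "x \<in> words n" "y \<in> fiber n i x"
  shows "w x * exp (- (t / n)) \<le> w y \<and> w y \<le> w x * exp (t / n)"
proof -
  have "y \<in> words n"
    using assms(3) fiber_subset_words by blast
  have "hamming n x y \<le> 1 / n" "hamming n y x \<le> 1 / n"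
    using hamming_fiber[OF assms(1,3)] assms(2,3) by (auto simp: hamming_def fiber_def eq_commute)
  then have "t * (g x - g y) \<le> t * (1 / n)" "t * (g y - g x) \<le> t * (1 / n)"
    using g_lip assms(2) \<open>y \<in> words n\<close> t_pos by (intro mult_left_mono; force)+
  then have "exp (t * g x + - (t / n)) \<le> exp (t * g y)" "exp (t * g y) \<le> exp (t * g x + t / n)"
    by (simp_all add: algebra_simps)
  then show ?thesis
    unfolding tilt_weight_def exp_add by simp
qed

lemma cond_mutual_info_le:
  assumes "i < n" "t \<le> n / 4"
  shows "cond_mutual_info2 n \<mu> w w' i \<le> 32 * (t / n)\<^sup>2 * P1"
proof (rule cond_mutual_info2_le)
  show "t / n \<le> 1 / 4"
    using assms by (simp add: divide_le_eq)
qed (use weight_bounds weight_fiber_close[OF assms(1)] t_pos in \<open>auto simp: tilt_compl_def\<close>)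

lemma DTC_drop:
  assumes "0 < n" "t \<le> n / 4"
    and gap: "100 / n * t\<^sup>2 \<le> t * mgf_deriv (words n) \<mu> g t / mgf (words n) \<mu> g t - ln (mgf (words n) \<mu> g t)"
  shows "P1 * (100 / n * t\<^sup>2) \<le> mutual_info2 n \<mu> w w'"
    and "P1 * DTC n q1 + P2 * DTC n q2 \<le> DTC n \<mu> - mutual_info2 n \<mu> w w' / 2"
proof -
  show I: "P1 * (100 / n * t\<^sup>2) \<le> mutual_info2 n \<mu> w w'"
    using mult_left_mono[OF gap less_imp_le[OF P_pos(1)]] mutual_info_ge_gap by linarith
  have "(\<Sum>i<n. cond_mutual_info2 n \<mu> w w' i) \<le> (\<Sum>i<n. 32 * (t / n)\<^sup>2 * P1)"
    using cond_mutual_info_le assms(2) by (intro sum_mono) auto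
  also have "\<dots> \<le> P1 * (100 / n * t\<^sup>2) / 2"
    using assms(1) P_pos t_pos by (simp add: power2_eq_square field_simps)
  also have "\<dots> \<le> mutual_info2 n \<mu> w w' / 2"
    using divide_right_mono[OF I, of 2] by simp
  finally show "P1 * DTC n q1 + P2 * DTC n q2 \<le> DTC n \<mu> - mutual_info2 n \<mu> w w' / 2"
    unfolding DTC_split by simp
qed

lemma mutual_info_ge:
  assumes "0 < n" "0 < r" "r \<le> t" "t \<le> n / 4"
    and gap: "100 / n * t\<^sup>2 \<le> t * mgf_deriv (words n) \<mu> g t / mgf (words n) \<mu> g t - ln (mgf (words n) \<mu> g t)"
  shows "r\<^sup>2 / n * exp (- real n) \<le> mutual_info2 n \<mu> w w'"
proof -
  have "r\<^sup>2 \<le> 50 * t\<^sup>2"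
    using power_mono[OF assms(3), of 2] assms(2) zero_le_power2[of t] by linarith
  then have "r\<^sup>2 / n \<le> 100 / n * t\<^sup>2 / 2"
    using divide_right_mono[of "r\<^sup>2" "50 * t\<^sup>2" "real n"] by simp
  moreover have "exp (- real n) \<le> exp (- t)"
    using assms(4) by simp
  then have "exp (- real n) \<le> 2 * P1"
    using integ_weight_ge by linarith
  ultimately have "r\<^sup>2 / n * exp (- real n) \<le> (100 / n * t\<^sup>2 / 2) * (2 * P1)"
    by (intro mult_mono) auto
  also have "\<dots> = P1 * (100 / n * t\<^sup>2)"
    by (simp add: mult_ac)
  also have "\<dots> \<le> mutual_info2 n \<mu> w w'"
    by (rule DTC_drop(1)[OF assms(1,4) gap])
  finally show ?thesis .
qed

end

theorem proposition6p2:
  fixes \<mu> :: "(nat \<Rightarrow> 'a::finite) \<Rightarrow> real" and n :: nat and r :: real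
  assumes "is_prob n \<mu>" and "r > 0"
    and "\<not> transport_ineq n \<mu> (r * real n / 200) r"
  shows "\<exists>\<rho>1 \<rho>2. fuzzy_partition2 n \<rho>1 \<rho>2
    \<and> mutual_info2 n \<mu> \<rho>1 \<rho>2 \<ge> r\<^sup>2 / real n * exp (- real n)
    \<and> integ n \<mu> \<rho>1 * DTC n (cond_meas n \<mu> \<rho>1) + integ n \<mu> \<rho>2 * DTC n (cond_meas n \<mu> \<rho>2)
        \<le> DTC n \<mu> - mutual_info2 n \<mu> \<rho>1 \<rho>2 / 2"
proof -
  obtain g t where "0 < n" "r < 1" and g: "\<forall>x\<in>words n. -1 \<le> g x \<and> g x \<le> 0"
    and lip: "\<forall>x\<in>words n. \<forall>y\<in>words n. g x - g y \<le> hamming n x y"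
    and t: "r \<le> t" "t \<le> r * real n / 200"
    and gap: "100 / real n * t\<^sup>2 \<le> t * mgf_deriv (words n) \<mu> g t / mgf (words n) \<mu> g t - ln (mgf (words n) \<mu> g t)"
    using transport_violation_tilt[OF assms] by blast
  interpret tilted_partition n \<mu> g t
    using assms(1,2) g lip t by unfold_locales auto
  have "r * real n \<le> 1 * real n"
    using \<open>r < 1\<close> by (intro mult_right_mono) auto
  then have "t \<le> real n / 4"
    using t by linarith
  then show ?thesis
    using fuzzy_partition mutual_info_ge[OF \<open>0 < n\<close> assms(2) t(1) _ gap]
      DTC_drop(2)[OF \<open>0 < n\<close> _ gap] by (intro exI[of _ w] exI[of _ w']) auto
qed

end
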